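(* Assume the standing assumptions with $\alpha\in(1,2)$. For $\phi\in\mathcal D(\mathbb R^d\times(0,\infty))$ let $\chi_\varepsilon(x,v,t)=\int_0^\infty e^{-\nu(v)z}\nu(v)\phi(x+\varepsilon vz,t)\,dz$. Then $$\lim_{\varepsilon\to0}\varepsilon^{-1}\int_{\mathbb R^d}\nu(v)\lambda(v)\big(\chi_\varepsilon(x,v,t)-\phi(x,t)\big)\,dv=\int_{\mathbb R^d}\lambda(v)\,\big(v\cdot\nabla_x\phi(x,t)\big)\,dv=D^T\nabla_x\phi(x,t),$$ where $D=\int\lambda(v)\otimes v\,dv$, and the limit holds uniformly in $(x,t)$ and in $L^2(\mathbb R^d\times(0,\infty))$.
   Context: Standing assumptions: $d\ge1$, $\alpha\in[1,2)$. $M:\mathbb R^d\to(0,\infty)$ satisfies $M(v)=M(-v)$, $\int M\,dv=1$, $|v|^{d+\alpha}M(v)\to\gamma>0$ as $|v|\to\infty$, $|\nabla_vM(v)|\le CM(v)/(1+|v|)$ and $|D_v^2M(v)|\le CM(v)$. The cross section $\sigma:\mathbb R^d\times\mathbb R^d\to\mathbb R$ satisfies $\sigma(v,v')=\sigma(v',v)$, $\nu_1\le\sigma\le\nu_2$ for constants $0<\nu_1\le\nu_2$, $|\nabla_v\sigma(v',v)|\le C/(1+|v|)$, and $|\sigma(v,v')-\nu_0|\le C/(1+|v|)$ for all $v,v'$, for some constant $\nu_0$. The collision frequency $\nu(v):=\int\sigma(v',v)M(v')\,dv'$ is assumed even. The linear Boltzmann operator is $Q(f)(v)=\int[\sigma(v,v')M(v)f(v')-\sigma(v',v)M(v')f(v)]\,dv'$.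 For a positive weight $w$, $L^2_{w^{-1}}$ denotes the $L^2$ space with norm $(\int|f|^2/w)^{1/2}$. $\lambda\in(L^2_{M^{-1}}(\mathbb R^d))^d$ is the unique solution of $Q(\lambda)=\nabla_vM$, $\int\lambda\,dv=0$ (componentwise). *)

theory Defs
  imports "HOL-Analysis.Analysis"
begin

primrec Ck_on :: "nat \<Rightarrow> 'a::euclidean_space set \<Rightarrow> ('a \<Rightarrow> real) \<Rightarrow> bool" where
  "Ck_on 0 S f = continuous_on S f"
| "Ck_on (Suc k) S f = (continuous_on S f \<and> (\<forall>x\<in>S. f differentiable (at x)) \<and>
      (\<forall>b\<in>Basis. Ck_on k S (\<lambda>x. frechet_derivative f (at x) b)))"

definition smooth_on :: "'a::euclidean_space set \<Rightarrow> ('a \<Rightarrow> real) \<Rightarrow> bool" where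
  "smooth_on S f = (\<forall>k. Ck_on k S f)"

definition test_function :: "('v::euclidean_space \<Rightarrow> real \<Rightarrow> real) \<Rightarrow> bool" where
  "test_function \<phi> = (smooth_on UNIV (case_prod \<phi>) \<and>
      compact (closure {p. case_prod \<phi> p \<noteq> 0}) \<and>
      closure {p. case_prod \<phi> p \<noteq> 0} \<subseteq> UNIV \<times> {0<..})"

definition gradx :: "('v::euclidean_space \<Rightarrow> real \<Rightarrow> real) \<Rightarrow> 'v \<Rightarrow> real \<Rightarrow> 'v" where
  "gradx \<phi> x t = (\<Sum>b\<in>Basis. frechet_derivative (\<lambda>y. \<phi> y t) (at x) b *\<^sub>R b)"

definition coll_freq :: "('v::euclidean_space \<Rightarrow> 'v \<Rightarrow> real) \<Rightarrow> ('v \<Rightarrow> real) \<Rightarrow> 'v \<Rightarrow> real" where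
  "coll_freq \<sigma> M v = (\<integral>v'. \<sigma> v' v * M v' \<partial>lborel)"

definition Qop :: "('v::euclidean_space \<Rightarrow> 'v \<Rightarrow> real) \<Rightarrow> ('v \<Rightarrow> real) \<Rightarrow> ('v \<Rightarrow> 'b::euclidean_space) \<Rightarrow> 'v \<Rightarrow> 'b" where
  "Qop \<sigma> M f v = (\<integral>v'. (\<sigma> v v' * M v) *\<^sub>R f v' - (\<sigma> v' v * M v') *\<^sub>R f v \<partial>lborel)"

definition chi :: "('v::euclidean_space \<Rightarrow> real) \<Rightarrow> ('v \<Rightarrow> real \<Rightarrow> real) \<Rightarrow> real \<Rightarrow> 'v \<Rightarrow> 'v \<Rightarrow> real \<Rightarrow> real" where
  "chi \<nu> \<phi> \<epsilon> x v t =
     (\<integral>z\<in>{0..}. exp (- \<nu> v * z) * \<nu> v * \<phi> (x + (\<epsilon> * z) *\<^sub>R v) t \<partial>lborel)"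

text \<open>D = int lambda(v) (x) v dv, with entries D_{ij} = int v_i lambda_j(v) dv (convention
  chosen so that D^T grad phi = int lambda(v) (v . grad phi) dv, as in the paper).\<close>
definition Dmat :: "('v::euclidean_space \<Rightarrow> 'v) \<Rightarrow> 'v \<Rightarrow> 'v \<Rightarrow> real" where
  "Dmat lam i j = (\<integral>v. (v \<bullet> i) * (lam v \<bullet> j) \<partial>lborel)"

definition DT_apply :: "('v::euclidean_space \<Rightarrow> 'v) \<Rightarrow> 'v \<Rightarrow> 'v" where
  "DT_apply lam g = (\<Sum>j\<in>Basis. (\<Sum>i\<in>Basis. Dmat lam i j * (g \<bullet> i)) *\<^sub>R j)"

end

theory Submission
  imports Defs "HOL-Probability.Distributions"
begin

text \<open>Expanding \<open>\<phi>(x + \<epsilon> z v, t)\<close> to first order, \<open>\<epsilon>\<^sup>-\<^sup>1 \<nu> (\<chi>\<^sub>\<epsilon> - \<phi>)\<close> is the average of the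
  difference quotients of \<open>\<phi>\<close> along \<open>v\<close> against the kernel \<open>\<nu> e\<^sup>-\<^sup>\<nu>\<^sup>z\<close>, and since the kernel has
  mean \<open>1 / \<nu>\<close> the linear part averages exactly to \<open>v \<bullet> \<nabla>\<phi>\<close>. With \<open>B\<^sub>1\<close>, \<open>B\<^sub>2\<close> bounds on the
  first and second derivatives of \<open>\<phi>\<close>, the remainder is at most
  \<open>min (2 B\<^sub>1 z |v|) (B\<^sub>2 \<epsilon> z\<^sup>2 |v|\<^sup>2)\<close>, and vanishes unless one end of the segment lies in the
  support of \<open>\<phi>\<close>. Integrated against \<open>|\<lambda>|\<close> it is therefore controlled by
  \<open>\<integral> |\<lambda>(v)| |v| min(1, c \<epsilon> |v|) dv\<close>, which tends to \<open>0\<close> as soon as \<open>|v| \<lambda> \<in> L\<^sup>1\<close>. That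
  integrability comes from the equation \<open>Q \<lambda> = \<nabla>M\<close>, which forces \<open>|\<lambda>| = O(M)\<close>, together with the
  tail \<open>M \<sim> \<gamma> |v|\<^sup>-\<^sup>d\<^sup>-\<^sup>\<alpha>\<close> with \<open>\<alpha> > 1\<close>. The bound is uniform in \<open>(x, t)\<close>; integrating its
  square over \<open>(x, t)\<close> with Fubini and translation invariance gives the \<open>L\<^sup>2\<close> statement.\<close>

section \<open>The exponential kernel\<close>

definition exp_kernel :: "real \<Rightarrow> real \<Rightarrow> real" where
  "exp_kernel a z = indicator {0..} z * (exp (- a * z) * a)"

lemma exp_kernel_nonneg: "0 \<le> a \<Longrightarrow> 0 \<le> exp_kernel a z"
  by (simp add: exp_kernel_def indicator_def)

lemma measurable_exp_kernel[measurable (raw)]: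
  assumes [measurable]: "f \<in> borel_measurable M" "g \<in> borel_measurable M"
  shows "(\<lambda>x. exp_kernel (f x) (g x)) \<in> borel_measurable M"
  unfolding exp_kernel_def by measurable

lemma chi_eq_exp_kernel:
  "chi \<nu> \<phi> \<epsilon> x v t = (\<integral>z. exp_kernel (\<nu> v) z * \<phi> (x + (\<epsilon> * z) *\<^sub>R v) t \<partial>lborel)"
  unfolding chi_def set_lebesgue_integral_def exp_kernel_def by (simp add: ac_simps)

text \<open>The kernel is the Erlang density of shape \<open>0\<close>.\<close>
lemma nn_integral_exp_kernel_moment:
  assumes a: "0 < a"
  shows "(\<integral>\<^sup>+z. ennreal (exp_kernel a z * z ^ i) \<partial>lborel) = ennreal (fact i / a ^ i)"
proof -
  have "(\<integral>\<^sup>+z. ennreal (exp_kernel a z * z ^ i) \<partial>lborel)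
      = (\<integral>\<^sup>+z. ennreal (erlang_density 0 a z * z ^ i) \<partial>lborel)"
    by (intro nn_integral_cong) (auto simp: exp_kernel_def erlang_density_def indicator_def ac_simps)
  also have "\<dots> = fact i / a ^ i"
    using nn_integral_erlang_ith_moment[OF a, of 0 i] by simp
  finally show ?thesis
    using a by (simp add: ennreal_divide_times divide_ennreal[symmetric] ennreal_power)
qed

lemma
  assumes a: "0 < a"
  shows integrable_exp_kernel_moment: "integrable lborel (\<lambda>z. exp_kernel a z * z ^ i)"
    and integral_exp_kernel_moment: "(\<integral>z. exp_kernel a z * z ^ i \<partial>lborel) = fact i / a ^ i"
proof -
  have nonneg: "AE z in lborel. 0 \<le> exp_kernel a z * z ^ i"
    using a by (auto simp: exp_kernel_def indicator_def)
  show int: "integrable lborel (\<lambda>z. exp_kernel a z * z ^ i)"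
    by (rule integrableI_nn_integral_finite[OF _ nonneg nn_integral_exp_kernel_moment[OF a]])
       measurable
  have "ennreal (\<integral>z. exp_kernel a z * z ^ i \<partial>lborel) = ennreal (fact i / a ^ i)"
    using nn_integral_eq_integral[OF int nonneg] nn_integral_exp_kernel_moment[OF a] by simp
  then show "(\<integral>z. exp_kernel a z * z ^ i \<partial>lborel) = fact i / a ^ i"
    using a integral_nonneg_AE[OF nonneg] by (subst (asm) ennreal_inj) auto
qed

lemma integrable_exp_kernel_mult:
  assumes a: "0 < a" and [measurable]: "\<psi> \<in> borel_measurable borel" and bound: "\<And>z. \<bar>\<psi> z\<bar> \<le> B"
  shows "integrable lborel (\<lambda>z. exp_kernel a z * \<psi> z)"
proof (rule Bochner_Integration.integrable_bound)
  show "integrable lborel (\<lambda>z. B * exp_kernel a z)"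
    using integrable_exp_kernel_moment[OF a, of 0] by simp
  show "AE z in lborel. norm (exp_kernel a z * \<psi> z) \<le> norm (B * exp_kernel a z)"
    using a bound by (auto simp: exp_kernel_nonneg abs_mult mult.commute[of "exp_kernel a _"]
        intro!: mult_right_mono order.trans[OF _ abs_ge_self])
qed measurable

text \<open>Since the kernel has mass \<open>1\<close> and mean \<open>1 / a\<close>, the deviation of its \<open>\<psi>\<close>-average from
  the linear prediction \<open>c + s \<epsilon> / a\<close> is the average of the pointwise deviations.\<close>
lemma exp_kernel_average_deviation_le:
  assumes a: "0 < a" and e: "0 < \<epsilon>"
    and [measurable]: "\<psi> \<in> borel_measurable borel" and bound: "\<And>z. \<bar>\<psi> z\<bar> \<le> B"
  shows "ennreal \<bar>a * ((\<integral>z. exp_kernel a z * \<psi> z \<partial>lborel) - c) / \<epsilon> - s\<bar>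
      \<le> ennreal a * (\<integral>\<^sup>+z. ennreal (exp_kernel a z * \<bar>(\<psi> z - c) / \<epsilon> - z * s\<bar>) \<partial>lborel)"
proof -
  let ?k = "exp_kernel a"
  define h where "h z = ?k z * \<psi> z / \<epsilon> - c / \<epsilon> * ?k z - s * (?k z * z ^ 1)" for z
  have int_k: "integrable lborel (\<lambda>z. ?k z * z ^ i)" for i
    by (rule integrable_exp_kernel_moment[OF a])
  have int_\<psi>: "integrable lborel (\<lambda>z. ?k z * \<psi> z)"
    by (rule integrable_exp_kernel_mult[OF a _ bound]) measurable
  have int_h: "integrable lborel h"
    unfolding h_def using int_\<psi> int_k[of 0] int_k[of 1] by simp
  have "(\<integral>z. h z \<partial>lborel) = (\<integral>z. ?k z * \<psi> z \<partial>lborel) / \<epsilon> - c / \<epsilon> - s / a"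
    unfolding h_def using int_\<psi> int_k[of 0] int_k[of 1]
      integral_exp_kernel_moment[OF a, of 0] integral_exp_kernel_moment[OF a, of 1]
    by simp
  then have "a * ((\<integral>z. ?k z * \<psi> z \<partial>lborel) - c) / \<epsilon> - s = a * (\<integral>z. h z \<partial>lborel)"
    using a e by (simp add: field_simps)
  then have "ennreal \<bar>a * ((\<integral>z. ?k z * \<psi> z \<partial>lborel) - c) / \<epsilon> - s\<bar>
      = ennreal a * ennreal (norm (\<integral>z. h z \<partial>lborel))"
    using a by (simp add: abs_mult ennreal_mult)
  also have "\<dots> \<le> ennreal a * (\<integral>\<^sup>+z. ennreal (norm (h z)) \<partial>lborel)"
    by (intro mult_left_mono integral_norm_bound_ennreal int_h) auto
  also have "(\<integral>\<^sup>+z. ennreal (norm (h z)) \<partial>lborel)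
      = (\<integral>\<^sup>+z. ennreal (?k z * \<bar>(\<psi> z - c) / \<epsilon> - z * s\<bar>) \<partial>lborel)"
  proof -
    have "h z = ?k z * ((\<psi> z - c) / \<epsilon> - z * s)" for z
      unfolding h_def by (simp add: algebra_simps diff_divide_distrib)
    then show ?thesis
      using a by (intro nn_integral_cong) (simp add: abs_mult exp_kernel_nonneg)
  qed
  finally show ?thesis .
qed

section \<open>Smooth functions with compact support\<close>

lemma frechet_derivative_eq_zero_outside:
  fixes h :: "'a::real_normed_vector \<Rightarrow> 'b::real_normed_vector"
  assumes "closed K" "\<And>p. p \<notin> K \<Longrightarrow> h p = 0" "p \<notin> K"
  shows "frechet_derivative h (at p) = (\<lambda>_. 0)"
proof -
  have "(h has_derivative (\<lambda>_. 0)) (at p)"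
    by (rule has_derivative_transform_within_open[OF has_derivative_const, where s="- K"])
       (use assms in \<open>auto simp: open_Compl\<close>)
  then show ?thesis by (rule frechet_derivative_at[symmetric])
qed

lemma bounded_of_compact_support:
  fixes h :: "'a::topological_space \<Rightarrow> real"
  assumes "continuous_on UNIV h" "compact K" "\<And>p. p \<notin> K \<Longrightarrow> h p = 0"
  obtains B where "0 \<le> B" "\<And>p. \<bar>h p\<bar> \<le> B"
proof -
  have "compact (h ` K)"
    by (rule compact_continuous_image[OF continuous_on_subset[OF assms(1)] assms(2)]) auto
  then obtain B where B: "\<forall>y\<in>h ` K. \<bar>y\<bar> \<le> B"
    using compact_imp_bounded bounded_iff by (metis real_norm_def)
  have "\<bar>h p\<bar> \<le> max B 0" for p
    using B assms(3) by (cases "p \<in> K") force+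
  then show ?thesis using that[of "max B 0"] by simp
qed

lemma uniformly_bounded_of_compact_support:
  fixes h :: "'i \<Rightarrow> 'a::topological_space \<Rightarrow> real"
  assumes "finite I" "\<And>i. i \<in> I \<Longrightarrow> continuous_on UNIV (h i)" "compact K"
    and "\<And>i p. i \<in> I \<Longrightarrow> p \<notin> K \<Longrightarrow> h i p = 0"
  obtains B where "0 \<le> B" "\<And>i p. i \<in> I \<Longrightarrow> \<bar>h i p\<bar> \<le> B"
proof -
  obtain B where B: "0 \<le> B" "\<And>p. \<bar>\<Sum>i\<in>I. \<bar>h i p\<bar>\<bar> \<le> B"
    by (rule bounded_of_compact_support[of "\<lambda>p. \<Sum>i\<in>I. \<bar>h i p\<bar>" K])
       (use assms in \<open>auto intro!: continuous_intros\<close>)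
  have "\<bar>h i p\<bar> \<le> B" if "i \<in> I" for i p
    using member_le_sum[OF that, of "\<lambda>i. \<bar>h i p\<bar>"] assms(1) B(2)[of p] by auto
  then show ?thesis using that B(1) by blast
qed

lemma linear_abs_le_DIM:
  fixes L :: "'a::euclidean_space \<Rightarrow> real" and B :: real
  assumes "linear L" "\<And>c. c \<in> Basis \<Longrightarrow> \<bar>L c\<bar> \<le> B"
  shows "\<bar>L k\<bar> \<le> DIM('a) * B * norm k"
proof -
  have "\<bar>L k\<bar> = \<bar>\<Sum>c\<in>Basis. (k \<bullet> c) * L c\<bar>"
    using Linear_Algebra.linear_componentwise[OF assms(1), of k 1] by simp
  also have "\<dots> \<le> (\<Sum>c\<in>(Basis::'a set). norm k * B)"
    by (intro order.trans[OF sum_abs] sum_mono)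
       (auto simp: abs_mult intro!: mult_mono Basis_le_norm assms(2))
  finally show ?thesis by (simp add: ac_simps)
qed

lemma abs_diff_le_of_frechet_derivative_bounded:
  fixes f :: "'a::euclidean_space \<Rightarrow> real" and B :: real
  assumes "\<And>x. f differentiable (at x)"
    and "\<And>x k. \<bar>frechet_derivative f (at x) k\<bar> \<le> B * norm k"
  shows "\<bar>f q - f p\<bar> \<le> B * norm (q - p)"
proof -
  have "norm (f q - f p) \<le> B * norm (q - p)"
  proof (rule differentiable_bound[where S=UNIV and f'="\<lambda>x. frechet_derivative f (at x)"])
    show "(f has_derivative frechet_derivative f (at x)) (at x within UNIV)" for x
      using assms(1) frechet_derivative_works by auto
    show "onorm (frechet_derivative f (at x)) \<le> B" for x
      by (rule onorm_le) (use assms(2) in simp)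
  qed auto
  then show ?thesis by simp
qed

lemma abs_diff_le_of_partials_bounded:
  fixes h :: "'a::euclidean_space \<Rightarrow> real" and B :: real
  assumes d: "\<And>x. h differentiable (at x)"
    and B: "\<And>x c. c \<in> Basis \<Longrightarrow> \<bar>frechet_derivative h (at x) c\<bar> \<le> B"
  shows "\<bar>h q - h p\<bar> \<le> DIM('a) * B * norm (q - p)"
proof (rule abs_diff_le_of_frechet_derivative_bounded[OF d])
  fix x k
  have "linear (frechet_derivative h (at x))"
    using d frechet_derivative_works has_derivative_linear by blast
  then show "\<bar>frechet_derivative h (at x) k\<bar> \<le> DIM('a) * B * norm k"
    by (rule linear_abs_le_DIM) (rule B)
qed

lemma taylor_remainder_le_of_derivative_lipschitz:
  fixes f :: "'a::euclidean_space \<Rightarrow> real" and B :: real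
  assumes d: "\<And>x. f differentiable (at x)"
    and L: "\<And>p q k. \<bar>frechet_derivative f (at q) k - frechet_derivative f (at p) k\<bar>
              \<le> B * norm k * norm (q - p)"
    and B: "0 \<le> B"
  shows "\<bar>f (p + k) - f p - frechet_derivative f (at p) k\<bar> \<le> B * (norm k)\<^sup>2"
proof -
  define f' where "f' x = frechet_derivative f (at x)" for x
  have lin: "linear (f' x)" for x
    using d frechet_derivative_works has_derivative_linear unfolding f'_def by blast
  define \<psi> where "\<psi> s = f (p + s *\<^sub>R k) - s * f' p k" for s :: real
  define \<psi>' where "\<psi>' s u = u * (f' (p + s *\<^sub>R k) k - f' p k)" for s u :: real
  have "(\<psi> has_derivative \<psi>' s) (at s within {0..1})" for s
  proof -
    have outer: "(f has_derivative f' (p + s *\<^sub>R k)) (at (p + s *\<^sub>R k))"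
      using d frechet_derivative_works unfolding f'_def by blast
    have inner: "((\<lambda>s. p + s *\<^sub>R k) has_derivative (\<lambda>u. u *\<^sub>R k)) (at s within {0..1})"
      by (auto intro!: derivative_eq_intros)
    from has_derivative_compose[OF inner outer]
    have "((\<lambda>s. f (p + s *\<^sub>R k)) has_derivative (\<lambda>u. u * f' (p + s *\<^sub>R k) k)) (at s within {0..1})"
      by (simp add: linear_cmul[OF lin])
    then show ?thesis
      unfolding \<psi>_def \<psi>'_def by (auto intro!: derivative_eq_intros simp: right_diff_distrib)
  qed
  moreover have "onorm (\<psi>' s) \<le> B * (norm k)\<^sup>2" if "s \<in> {0..1}" for s
  proof (rule onorm_le)
    fix u
    have "\<bar>f' (p + s *\<^sub>R k) k - f' p k\<bar> \<le> B * norm k * (s * norm k)"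
      using L[of "p + s *\<^sub>R k" k p] that unfolding f'_def by simp
    also have "\<dots> \<le> B * (norm k)\<^sup>2"
      using that B mult_left_mono[of s 1 "B * norm k * norm k"] by (simp add: power2_eq_square ac_simps)
    finally show "norm (\<psi>' s u) \<le> B * (norm k)\<^sup>2 * norm u"
      unfolding \<psi>'_def by (simp add: abs_mult mult_left_mono mult.commute)
  qed
  ultimately have "norm (\<psi> 1 - \<psi> 0) \<le> B * (norm k)\<^sup>2 * norm (1 - 0 :: real)"
    by (intro differentiable_bound[OF convex_real_interval(5)]) auto
  then show ?thesis unfolding \<psi>_def f'_def by simp
qed

lemma Ck2_compact_support_derivative_bounds:
  fixes f :: "'a::euclidean_space \<Rightarrow> real"
  assumes C2: "Ck_on 2 UNIV f" and K: "compact K" and supp: "\<And>p. p \<notin> K \<Longrightarrow> f p = 0"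
  obtains B1 B2 where "0 < B1" "0 < B2"
    "\<And>p k. \<bar>frechet_derivative f (at p) k\<bar> \<le> B1 * norm k"
    "\<And>p q k. \<bar>frechet_derivative f (at q) k - frechet_derivative f (at p) k\<bar> \<le> B2 * norm k * norm (q - p)"
proof -
  define f' where "f' p = frechet_derivative f (at p)" for p
  define f'' where "f'' bc p = frechet_derivative (\<lambda>x. f' x (fst bc)) (at p) (snd bc)" for bc p
  have closed: "closed K" using K by (rule compact_imp_closed)
  from C2 have df: "\<And>p. f differentiable (at p)"
    and c1: "\<And>b. b \<in> Basis \<Longrightarrow> continuous_on UNIV (\<lambda>x. f' x b)"
    and d1: "\<And>b p. b \<in> Basis \<Longrightarrow> (\<lambda>x. f' x b) differentiable (at p)"
    and c2: "\<And>bc. bc \<in> Basis \<times> Basis \<Longrightarrow> continuous_on UNIV (f'' bc)"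
    by (auto simp: numeral_2_eq_2 f'_def f''_def)
  have lin: "linear (f' p)" for p
    using df frechet_derivative_works has_derivative_linear unfolding f'_def by blast
  have f'_outside: "f' p = (\<lambda>_. 0)" if "p \<notin> K" for p
    unfolding f'_def by (rule frechet_derivative_eq_zero_outside[OF closed supp that])
  have f''_outside: "f'' bc p = 0" if "p \<notin> K" for p bc
    unfolding f''_def by (subst frechet_derivative_eq_zero_outside[OF closed _ that]) (auto simp: f'_outside)
  obtain B'' where B'': "0 \<le> B''" "\<And>bc p. bc \<in> Basis \<times> Basis \<Longrightarrow> \<bar>f'' bc p\<bar> \<le> B''"
    by (rule uniformly_bounded_of_compact_support[OF _ c2 K f''_outside]) auto
  obtain B' where B': "0 \<le> B'" "\<And>b p. b \<in> Basis \<Longrightarrow> \<bar>f' p b\<bar> \<le> B'"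
    by (rule uniformly_bounded_of_compact_support[of Basis "\<lambda>b p. f' p b", OF _ c1 K])
       (auto simp: f'_outside)
  have "\<bar>f' p k\<bar> \<le> (DIM('a) * B' + 1) * norm k" for p k
    by (rule order_trans[OF linear_abs_le_DIM[OF lin B'(2)] mult_right_mono]) auto
  moreover have "\<bar>f' q k - f' p k\<bar> \<le> (DIM('a) * (DIM('a) * B'') + 1) * norm k * norm (q - p)" for p q k
  proof -
    have "\<bar>f' q b - f' p b\<bar> \<le> DIM('a) * B'' * norm (q - p)" if "b \<in> Basis" for b
      using abs_diff_le_of_partials_bounded[OF d1[OF that], of B'' q p] B''(2) that
      by (auto simp: f''_def)
    from linear_abs_le_DIM[OF linear_compose_sub[OF lin lin] this]
    have "\<bar>f' q k - f' p k\<bar> \<le> DIM('a) * (DIM('a) * B'' * norm (q - p)) * norm k" .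
    also have "\<dots> \<le> (DIM('a) * (DIM('a) * B'') + 1) * norm k * norm (q - p)"
      by (simp add: algebra_simps)
    finally show ?thesis .
  qed
  ultimately show ?thesis
    using that[of "DIM('a) * B' + 1" "DIM('a) * (DIM('a) * B'') + 1"] B'(1) B''(1)
    unfolding f'_def by (simp add: add_nonneg_pos)
qed

section \<open>Regular profiles and test functions\<close>

locale regular_profile =
  fixes \<phi> :: "'v::euclidean_space \<Rightarrow> real \<Rightarrow> real" and g :: "'v \<Rightarrow> real \<Rightarrow> 'v"
    and K :: "('v \<times> real) set" and B0 B1 B2 :: real
  assumes compact_support: "compact K"
    and support: "\<And>x t. \<phi> x t \<noteq> 0 \<Longrightarrow> (x, t) \<in> K"
    and support_gradient: "\<And>x t. g x t \<noteq> 0 \<Longrightarrow> (x, t) \<in> K"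
    and bounded: "\<And>x t. \<bar>\<phi> x t\<bar> \<le> B0"
    and B1_pos: "0 < B1" and B2_pos: "0 < B2"
    and lipschitz: "\<And>x h t. \<bar>\<phi> (x + h) t - \<phi> x t\<bar> \<le> B1 * norm h"
    and gradient_bounded: "\<And>x t. norm (g x t) \<le> B1"
    and taylor: "\<And>x h t. \<bar>\<phi> (x + h) t - \<phi> x t - h \<bullet> g x t\<bar> \<le> B2 * (norm h)\<^sup>2"

context regular_profile
begin

lemma continuous_on_profile: "continuous_on UNIV (\<lambda>x. \<phi> x t)"
proof (rule lipschitz_on_continuous_on, rule lipschitz_onI)
  show "dist (\<phi> x t) (\<phi> y t) \<le> B1 * dist x y" for x y
    using lipschitz[of y "x - y" t] by (simp add: dist_norm)
qed (use B1_pos in simp)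

text \<open>The weight interpolates between the Lipschitz bound \<open>2 B1 z |v|\<close> and the Taylor bound
  \<open>B2 \<epsilon> z\<^sup>2 |v|\<^sup>2\<close> of the remainder of the difference quotient below.\<close>
definition remainder_weight :: "real \<Rightarrow> real \<Rightarrow> 'v \<Rightarrow> real" where
  "remainder_weight \<epsilon> z v = (z + z\<^sup>2) * (2 * B1 * norm v * min 1 (B2 / (2 * B1) * \<epsilon> * norm v))"

lemma remainder_weight_nonneg: "0 \<le> \<epsilon> \<Longrightarrow> 0 \<le> z \<Longrightarrow> 0 \<le> remainder_weight \<epsilon> z v"
  unfolding remainder_weight_def using B1_pos B2_pos by simp

lemma difference_quotient_remainder_le_weight:
  assumes e: "0 < \<epsilon>" and z: "0 \<le> z"
  shows "\<bar>(\<phi> (x + (\<epsilon> * z) *\<^sub>R v) t - \<phi> x t) / \<epsilon> - z * (v \<bullet> g x t)\<bar> \<le> remainder_weight \<epsilon> z v"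
proof -
  let ?h = "(\<epsilon> * z) *\<^sub>R v"
  define d where "d = (\<phi> (x + ?h) t - \<phi> x t) / \<epsilon> - z * (v \<bullet> g x t)"
  have "\<bar>d\<bar> \<le> B1 * z * norm v + B1 * z * norm v"
  proof -
    have "\<bar>(\<phi> (x + ?h) t - \<phi> x t) / \<epsilon>\<bar> \<le> B1 * z * norm v"
      using lipschitz[of x ?h t] e z by (simp add: abs_mult divide_le_eq field_simps)
    moreover have "\<bar>z * (v \<bullet> g x t)\<bar> \<le> B1 * z * norm v"
    proof -
      have "\<bar>v \<bullet> g x t\<bar> \<le> norm v * B1"
        using Cauchy_Schwarz_ineq2[of v "g x t"] gradient_bounded[of x t]
        by (meson mult_left_mono norm_ge_zero order_trans)
      from mult_left_mono[OF this z] show ?thesis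
        using z by (simp add: abs_mult ac_simps)
    qed
    ultimately show ?thesis
      unfolding d_def by linarith
  qed
  moreover have "\<bar>d\<bar> \<le> B2 * \<epsilon> * z\<^sup>2 * (norm v)\<^sup>2"
  proof -
    have "d = (\<phi> (x + ?h) t - \<phi> x t - ?h \<bullet> g x t) / \<epsilon>"
      unfolding d_def using e by (simp add: field_simps)
    also have "\<bar>\<dots>\<bar> \<le> B2 * (norm ?h)\<^sup>2 / \<epsilon>"
      using taylor[of x ?h t] e by (simp add: divide_right_mono)
    also have "\<dots> = B2 * \<epsilon> * z\<^sup>2 * (norm v)\<^sup>2"
      using e z by (simp add: power2_eq_square field_simps)
    finally show ?thesis .
  qed
  ultimately show ?thesis
    unfolding d_def[symmetric] remainder_weight_def using B1_pos B2_pos e z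
    by (cases "B2 / (2 * B1) * \<epsilon> * norm v \<le> 1")
       (auto simp: power2_eq_square field_simps min_def intro: order_trans)
qed

lemma difference_quotient_remainder_le:
  assumes e: "0 < \<epsilon>" and z: "0 \<le> z"
  shows "\<bar>(\<phi> (x + (\<epsilon> * z) *\<^sub>R v) t - \<phi> x t) / \<epsilon> - z * (v \<bullet> g x t)\<bar>
    \<le> remainder_weight \<epsilon> z v * (indicator K (x, t) + indicator K (x + (\<epsilon> * z) *\<^sub>R v, t))"
proof (cases "(x, t) \<in> K \<or> (x + (\<epsilon> * z) *\<^sub>R v, t) \<in> K")
  case True
  then have "remainder_weight \<epsilon> z v
      \<le> remainder_weight \<epsilon> z v * (indicator K (x, t) + indicator K (x + (\<epsilon> * z) *\<^sub>R v, t))"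
    using remainder_weight_nonneg[of \<epsilon> z v] e z by (auto simp: indicator_def)
  with difference_quotient_remainder_le_weight[OF e z] show ?thesis
    by (rule order_trans)
next
  case False
  then have "\<phi> (x + (\<epsilon> * z) *\<^sub>R v) t = 0" "\<phi> x t = 0" "g x t = 0"
    using support support_gradient by blast+
  then show ?thesis
    using False by simp
qed

end

lemma inner_gradx_eq_frechet_derivative:
  fixes \<phi> :: "'v::euclidean_space \<Rightarrow> real \<Rightarrow> real"
  assumes "case_prod \<phi> differentiable (at (x, t))"
  shows "h \<bullet> gradx \<phi> x t = frechet_derivative (case_prod \<phi>) (at (x, t)) (h, 0)"
proof -
  define f' where "f' = frechet_derivative (case_prod \<phi>) (at (x, t))"
  have f': "(case_prod \<phi> has_derivative f') (at (x, t))"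
    using assms frechet_derivative_works unfolding f'_def by blast
  have "((\<lambda>y. (y, t)) has_derivative (\<lambda>h. (h, 0))) (at x)"
    by (auto intro!: derivative_eq_intros)
  from has_derivative_compose[OF this f']
  have partial: "frechet_derivative (\<lambda>y. \<phi> y t) (at x) = (\<lambda>h. f' (h, 0))"
    by (simp add: frechet_derivative_at[symmetric])
  have "linear (\<lambda>h. f' (h, 0))"
    using linear_compose[OF _ has_derivative_linear[OF f'], of "\<lambda>h. (h, 0)"]
    by (simp add: linear_iff o_def)
  then have "f' (h, 0) = (\<Sum>b\<in>Basis. (h \<bullet> b) * f' (b, 0))"
    using Linear_Algebra.linear_componentwise[of "\<lambda>h. f' (h, 0)" h 1] by simp
  then show ?thesis
    unfolding gradx_def partial f'_def by (simp add: inner_sum_right mult.commute)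
qed

lemma Ck2_compact_support_regular_profile:
  fixes \<phi> :: "'v::euclidean_space \<Rightarrow> real \<Rightarrow> real"
  assumes C2: "Ck_on 2 UNIV (case_prod \<phi>)" and K: "compact K"
    and supp: "\<And>p. p \<notin> K \<Longrightarrow> case_prod \<phi> p = 0"
  obtains B0 B1 B2 where "regular_profile \<phi> (gradx \<phi>) K B0 B1 B2"
proof -
  define f where "f = case_prod \<phi>"
  have df: "f differentiable (at p)" for p
    using C2 unfolding f_def numeral_2_eq_2 Ck_on.simps by blast
  have cont: "continuous_on UNIV f"
    using C2 unfolding f_def numeral_2_eq_2 Ck_on.simps by blast
  obtain B0 where B0: "\<And>p. \<bar>f p\<bar> \<le> B0"
    using bounded_of_compact_support[OF cont K supp[folded f_def]] by metis
  obtain B1 B2 where B: "0 < B1" "0 < B2"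
    and f'_bound: "\<And>p k. \<bar>frechet_derivative f (at p) k\<bar> \<le> B1 * norm k"
    and f'_lipschitz: "\<And>p q k. \<bar>frechet_derivative f (at q) k - frechet_derivative f (at p) k\<bar>
                         \<le> B2 * norm k * norm (q - p)"
    using Ck2_compact_support_derivative_bounds[OF C2[folded f_def] K supp[folded f_def]] by metis
  have inner_gradx: "h \<bullet> gradx \<phi> x t = frechet_derivative f (at (x, t)) (h, 0)" for x h t
    unfolding f_def by (rule inner_gradx_eq_frechet_derivative) (use df in \<open>simp add: f_def\<close>)
  have "regular_profile \<phi> (gradx \<phi>) K B0 B1 B2"
  proof
    show "\<bar>\<phi> (x + h) t - \<phi> x t\<bar> \<le> B1 * norm h" for x h t
      using abs_diff_le_of_frechet_derivative_bounded[OF df f'_bound, of "(x + h, t)" "(x, t)"]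
      by (simp add: f_def)
    show "norm (gradx \<phi> x t) \<le> B1" for x t
    proof -
      have "norm (gradx \<phi> x t) * norm (gradx \<phi> x t) \<le> B1 * norm (gradx \<phi> x t)"
        using f'_bound[of "(x, t)" "(gradx \<phi> x t, 0)"] inner_gradx[of "gradx \<phi> x t" x t]
        by (simp add: power2_norm_eq_inner[symmetric] power2_eq_square)
      then show ?thesis using B(1) by (cases "gradx \<phi> x t = 0") auto
    qed
    show "\<bar>\<phi> (x + h) t - \<phi> x t - h \<bullet> gradx \<phi> x t\<bar> \<le> B2 * (norm h)\<^sup>2" for x h t
      using taylor_remainder_le_of_derivative_lipschitz[OF df f'_lipschitz, of "(x, t)" "(h, 0)"] B
      by (simp add: inner_gradx f_def)
    show "(x, t) \<in> K" if "gradx \<phi> x t \<noteq> 0" for x t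
    proof (rule ccontr)
      assume "(x, t) \<notin> K"
      then have "gradx \<phi> x t \<bullet> gradx \<phi> x t = 0"
        using frechet_derivative_eq_zero_outside[OF compact_imp_closed[OF K] supp[folded f_def]]
        by (simp add: inner_gradx)
      with that show False by simp
    qed
    show "(x, t) \<in> K" if "\<phi> x t \<noteq> 0" for x t
      using that supp[of "(x, t)"] by auto
    show "\<bar>\<phi> x t\<bar> \<le> B0" for x t
      using B0[of "(x, t)"] by (simp add: f_def)
  qed (use K B in auto)
  then show ?thesis by (rule that)
qed

lemma test_function_regular_profile:
  fixes \<phi> :: "'v::euclidean_space \<Rightarrow> real \<Rightarrow> real"
  assumes "test_function \<phi>"
  obtains K B0 B1 B2 where "regular_profile \<phi> (gradx \<phi>) K B0 B1 B2"
proof -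
  define K where "K = closure {p. case_prod \<phi> p \<noteq> 0}"
  have K: "compact K"
    using assms unfolding test_function_def K_def by (rule conjunct1[OF conjunct2])
  have C2: "Ck_on 2 UNIV (case_prod \<phi>)"
    using assms unfolding test_function_def smooth_on_def by (rule conjunct1[THEN spec])
  have "case_prod \<phi> p = 0" if "p \<notin> K" for p
    using that closure_subset[of "{p. case_prod \<phi> p \<noteq> 0}"] unfolding K_def by blast
  then show ?thesis
    using Ck2_compact_support_regular_profile[OF C2 K] that by metis
qed

section \<open>The collision frequency and the integrability of \<open>\<lambda>\<close>\<close>

lemma measurable_sections_of_cross_section:
  fixes \<sigma> :: "'v::euclidean_space \<Rightarrow> 'v \<Rightarrow> real"
  assumes \<sigma>: "(\<lambda>p. \<sigma> (fst p) (snd p)) \<in> borel_measurable borel"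
  shows "(\<lambda>v'. \<sigma> v' v) \<in> borel_measurable lborel" "(\<lambda>v'. \<sigma> v v') \<in> borel_measurable lborel"
    and "(\<lambda>p. \<sigma> (snd p) (fst p)) \<in> borel_measurable (lborel \<Otimes>\<^sub>M lborel)"
proof -
  have "(\<lambda>v'::'v. (v', v)) \<in> borel_measurable borel" "(\<lambda>v'::'v. (v, v')) \<in> borel_measurable borel"
    "(\<lambda>p::'v \<times> 'v. (snd p, fst p)) \<in> borel_measurable borel"
    by (intro borel_measurable_continuous_onI continuous_intros)+
  from this[THEN measurable_compose, OF \<sigma>]
  show "(\<lambda>v'. \<sigma> v' v) \<in> borel_measurable lborel" "(\<lambda>v'. \<sigma> v v') \<in> borel_measurable lborel"
    and "(\<lambda>p. \<sigma> (snd p) (fst p)) \<in> borel_measurable (lborel \<Otimes>\<^sub>M lborel)"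
    by (simp_all add: lborel_prod)
qed

lemma integrable_cross_section_mult:
  fixes \<sigma> :: "'v::euclidean_space \<Rightarrow> 'v \<Rightarrow> real"
  assumes [measurable]: "(\<lambda>v'. \<sigma> v' v) \<in> borel_measurable lborel"
    and \<sigma>: "\<And>v'. \<bar>\<sigma> v' v\<bar> \<le> c" and M: "integrable lborel M"
  shows "integrable lborel (\<lambda>v'. \<sigma> v' v * M v')"
proof (rule Bochner_Integration.integrable_bound[OF integrable_mult_right[OF integrable_norm[OF M], of c]])
  show "(\<lambda>v'. \<sigma> v' v * M v') \<in> borel_measurable lborel"
    using borel_measurable_integrable[OF M] by measurable
  show "AE v' in lborel. norm (\<sigma> v' v * M v') \<le> norm (c * norm (M v'))"
    by (intro AE_I2) (simp add: abs_mult mult_right_mono[OF order_trans[OF \<sigma> abs_ge_self]])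
qed

lemma coll_freq_measurable:
  fixes \<sigma> :: "'v::euclidean_space \<Rightarrow> 'v \<Rightarrow> real"
  assumes "(\<lambda>p. \<sigma> (fst p) (snd p)) \<in> borel_measurable borel" and [measurable]: "M \<in> borel_measurable lborel"
  shows "coll_freq \<sigma> M \<in> borel_measurable lborel"
proof -
  note [measurable] = measurable_sections_of_cross_section(3)[OF assms(1)]
  have "(\<lambda>p::'v \<times> 'v. \<sigma> (snd p) (fst p) * M (snd p)) \<in> borel_measurable (lborel \<Otimes>\<^sub>M lborel)"
    by measurable
  then have "(\<lambda>v. \<integral>v'. \<sigma> v' v * M v' \<partial>lborel) \<in> borel_measurable lborel"
    by (intro lborel.borel_measurable_lebesgue_integral) (simp add: case_prod_beta')
  then show ?thesis
    unfolding coll_freq_def .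
qed

lemma coll_freq_bounds:
  fixes \<sigma> :: "'v::euclidean_space \<Rightarrow> 'v \<Rightarrow> real"
  assumes \<sigma>: "(\<lambda>p. \<sigma> (fst p) (snd p)) \<in> borel_measurable borel"
    and bounds: "\<And>v v'. \<nu>1 \<le> \<sigma> v v' \<and> \<sigma> v v' \<le> \<nu>2"
    and M: "\<And>v. 0 \<le> M v" "integrable lborel M" "(\<integral>v. M v \<partial>lborel) = 1"
  shows "\<nu>1 \<le> coll_freq \<sigma> M v" "coll_freq \<sigma> M v \<le> \<nu>2"
proof -
  have "\<bar>\<sigma> v' v\<bar> \<le> \<bar>\<nu>1\<bar> + \<bar>\<nu>2\<bar>" for v'
    using bounds[of v' v] abs_ge_self[of \<nu>2] abs_ge_minus_self[of \<nu>1] unfolding abs_le_iff by linarith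
  then have int: "integrable lborel (\<lambda>v'. \<sigma> v' v * M v')"
    by (rule integrable_cross_section_mult[OF measurable_sections_of_cross_section(1)[OF \<sigma>] _ M(2)])
  have "\<nu>1 = (\<integral>v'. \<nu>1 * M v' \<partial>lborel)" using M by simp
  also have "\<dots> \<le> coll_freq \<sigma> M v"
    unfolding coll_freq_def using bounds M(1)
    by (intro integral_mono integrable_mult_right M(2) int) (auto intro!: mult_right_mono)
  finally show "\<nu>1 \<le> coll_freq \<sigma> M v" .
  have "coll_freq \<sigma> M v \<le> (\<integral>v'. \<nu>2 * M v' \<partial>lborel)"
    unfolding coll_freq_def using bounds M(1)
    by (intro integral_mono integrable_mult_right M(2) int) (auto intro!: mult_right_mono)
  also have "\<dots> = \<nu>2" using M by simp
  finally show "coll_freq \<sigma> M v \<le> \<nu>2" .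
qed

lemma integrable_norm_of_integrable_norm_sq_div:
  fixes f :: "'v::euclidean_space \<Rightarrow> 'b::euclidean_space"
  assumes [measurable]: "f \<in> borel_measurable lborel"
    and f: "integrable lborel (\<lambda>v. (norm (f v))\<^sup>2 / M v)"
    and M: "integrable lborel M" "\<And>v. 0 < M v"
  shows "integrable lborel (\<lambda>v. norm (f v))"
proof (rule Bochner_Integration.integrable_bound[OF Bochner_Integration.integrable_add[OF f M(1)]])
  show "AE v in lborel. norm (norm (f v)) \<le> norm ((norm (f v))\<^sup>2 / M v + M v)"
  proof (intro AE_I2)
    fix v
    have "0 \<le> norm (f v) * M v"
      using M(2)[of v] by simp
    moreover have "2 * (norm (f v) * M v) \<le> (norm (f v))\<^sup>2 + (M v)\<^sup>2"
      using sum_squares_bound[of "norm (f v)" "M v"] by (simp add: mult.assoc)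
    ultimately have "norm (f v) * M v \<le> (norm (f v))\<^sup>2 + M v * M v"
      by (simp add: power2_eq_square)
    then show "norm (norm (f v)) \<le> norm ((norm (f v))\<^sup>2 / M v + M v)"
      using M(2)[of v] by (simp add: field_simps)
  qed
qed measurable

lemma
  fixes \<sigma> :: "'v::euclidean_space \<Rightarrow> 'v \<Rightarrow> real" and lam :: "'v \<Rightarrow> 'b::euclidean_space"
  assumes [measurable]: "(\<lambda>v'. \<sigma> v v') \<in> borel_measurable lborel" "lam \<in> borel_measurable lborel"
    and \<sigma>: "\<And>v'. \<bar>\<sigma> v v'\<bar> \<le> c" and lam: "integrable lborel (\<lambda>v. norm (lam v))"
  shows integrable_gain_term: "integrable lborel (\<lambda>v'. (\<sigma> v v' * m) *\<^sub>R lam v')"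
    and norm_integral_gain_term_le:
      "norm (\<integral>v'. (\<sigma> v v' * m) *\<^sub>R lam v' \<partial>lborel) \<le> c * \<bar>m\<bar> * (\<integral>v. norm (lam v) \<partial>lborel)"
proof -
  have c: "0 \<le> c" using \<sigma>[of v] by linarith
  have bound: "norm ((\<sigma> v v' * m) *\<^sub>R lam v') \<le> c * \<bar>m\<bar> * norm (lam v')" for v'
    using \<sigma>[of v'] by (simp add: abs_mult mult_right_mono)
  have "norm ((\<sigma> v v' * m) *\<^sub>R lam v') \<le> norm (c * \<bar>m\<bar> * norm (lam v'))" for v'
    using bound[of v'] c by (simp add: abs_mult)
  then show int: "integrable lborel (\<lambda>v'. (\<sigma> v v' * m) *\<^sub>R lam v')"
    by (intro Bochner_Integration.integrable_bound[OF integrable_mult_right[OF lam] _ AE_I2]) simp_all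
  have "norm (\<integral>v'. (\<sigma> v v' * m) *\<^sub>R lam v' \<partial>lborel) \<le> (\<integral>v'. norm ((\<sigma> v v' * m) *\<^sub>R lam v') \<partial>lborel)"
    by (rule integral_norm_bound)
  also have "\<dots> \<le> (\<integral>v'. c * \<bar>m\<bar> * norm (lam v') \<partial>lborel)"
    by (rule integral_mono[OF integrable_norm[OF int] integrable_mult_right[OF lam] bound])
  finally show "norm (\<integral>v'. (\<sigma> v v' * m) *\<^sub>R lam v' \<partial>lborel) \<le> c * \<bar>m\<bar> * (\<integral>v. norm (lam v) \<partial>lborel)"
    by simp
qed

lemma Qop_eq_gain_sub_loss:
  fixes \<sigma> :: "'v::euclidean_space \<Rightarrow> 'v \<Rightarrow> real" and lam :: "'v \<Rightarrow> 'b::euclidean_space"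
  assumes \<sigma>: "(\<lambda>p. \<sigma> (fst p) (snd p)) \<in> borel_measurable borel" "\<And>v v'. \<bar>\<sigma> v v'\<bar> \<le> c"
    and M: "integrable lborel M"
    and [measurable]: "lam \<in> borel_measurable lborel" and lam: "integrable lborel (\<lambda>v. norm (lam v))"
  shows "Qop \<sigma> M lam v = (\<integral>v'. (\<sigma> v v' * M v) *\<^sub>R lam v' \<partial>lborel) - coll_freq \<sigma> M v *\<^sub>R lam v"
proof -
  note [measurable] = measurable_sections_of_cross_section[OF \<sigma>(1)]
  have loss: "integrable lborel (\<lambda>v'. \<sigma> v' v * M v')"
    by (rule integrable_cross_section_mult[OF _ \<sigma>(2) M]) measurable
  have gain: "integrable lborel (\<lambda>v'. (\<sigma> v v' * M v) *\<^sub>R lam v')"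
    by (rule integrable_gain_term[OF _ _ \<sigma>(2) lam]) measurable
  have "(\<integral>v'. (\<sigma> v' v * M v') *\<^sub>R lam v \<partial>lborel) = coll_freq \<sigma> M v *\<^sub>R lam v"
    unfolding coll_freq_def by (rule integral_scaleR_left) (rule loss)
  then show ?thesis
    unfolding Qop_def by (simp add: Bochner_Integration.integral_diff[OF gain integrable_scaleR_left[OF loss]])
qed

text \<open>Reading \<open>Q \<lambda> = \<nabla>M\<close> as \<open>\<nu> \<lambda> = \<integral>\<sigma>(v, v') M(v) \<lambda>(v') dv' - \<nabla>M\<close>, both terms on the right
  are \<open>O(M)\<close>.\<close>
lemma Qop_solution_le_mult:
  fixes \<sigma> :: "'v::euclidean_space \<Rightarrow> 'v \<Rightarrow> real" and lam gradM :: "'v \<Rightarrow> 'v"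
  assumes \<sigma>: "(\<lambda>p. \<sigma> (fst p) (snd p)) \<in> borel_measurable borel"
    and bounds: "0 < \<nu>1" "\<And>v v'. \<nu>1 \<le> \<sigma> v v' \<and> \<sigma> v v' \<le> \<nu>2"
    and M: "\<And>v. 0 < M v" "integrable lborel M" "(\<integral>v. M v \<partial>lborel) = 1"
    and gradM: "\<And>v. norm (gradM v) \<le> C * M v / (1 + norm v)"
    and [measurable]: "lam \<in> borel_measurable lborel"
    and lam: "integrable lborel (\<lambda>v. norm (lam v))"
    and eq: "AE v in lborel. Qop \<sigma> M lam v = gradM v"
  obtains c where "AE v in lborel. norm (lam v) \<le> c * M v"
proof -
  note [measurable] = measurable_sections_of_cross_section[OF \<sigma>]
  define L where "L = (\<integral>v. norm (lam v) \<partial>lborel)"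
  have \<sigma>_abs: "\<bar>\<sigma> v v'\<bar> \<le> \<nu>2" for v v'
    using bounds(1) bounds(2)[of v v'] by linarith
  have "norm (lam v) \<le> (\<nu>2 * L + \<bar>C\<bar>) / \<nu>1 * M v" if "Qop \<sigma> M lam v = gradM v" for v
  proof -
    let ?gain = "\<integral>v'. (\<sigma> v v' * M v) *\<^sub>R lam v' \<partial>lborel"
    have \<nu>: "\<nu>1 \<le> coll_freq \<sigma> M v"
      by (rule coll_freq_bounds(1)[OF \<sigma> bounds(2) less_imp_le[OF M(1)] M(2,3)])
    have "coll_freq \<sigma> M v *\<^sub>R lam v = ?gain - gradM v"
      using that Qop_eq_gain_sub_loss[OF \<sigma> \<sigma>_abs M(2) _ lam] by (simp add: algebra_simps)
    then have "norm (coll_freq \<sigma> M v *\<^sub>R lam v) \<le> norm ?gain + norm (gradM v)"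
      by (simp add: norm_triangle_ineq4)
    then have "coll_freq \<sigma> M v * norm (lam v) \<le> norm ?gain + norm (gradM v)"
      using \<nu> bounds(1) by (simp add: abs_of_pos)
    moreover have "norm ?gain \<le> \<nu>2 * \<bar>M v\<bar> * L"
      unfolding L_def by (rule norm_integral_gain_term_le[OF _ _ \<sigma>_abs lam]) measurable
    moreover have "norm (gradM v) \<le> \<bar>C\<bar> * M v"
    proof -
      have "C * M v / (1 + norm v) \<le> \<bar>C\<bar> * M v / (1 + norm v)"
        using M(1)[of v] by (intro divide_right_mono mult_right_mono) auto
      also have "\<dots> \<le> \<bar>C\<bar> * M v"
        using divide_left_mono[of 1 "1 + norm v" "\<bar>C\<bar> * M v"] M(1)[of v]
        by (simp add: add_pos_nonneg)
      finally show ?thesis using gradM[of v] by linarith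
    qed
    moreover have "\<nu>1 * norm (lam v) \<le> coll_freq \<sigma> M v * norm (lam v)"
      using \<nu> by (simp add: mult_right_mono)
    ultimately have "\<nu>1 * norm (lam v) \<le> (\<nu>2 * L + \<bar>C\<bar>) * M v"
      using M(1)[of v] unfolding distrib_right by (simp add: ac_simps)
    from divide_right_mono[OF this less_imp_le[OF bounds(1)]] show ?thesis
      using bounds(1) by simp
  qed
  then show ?thesis
    using eq by (intro that[of "(\<nu>2 * L + \<bar>C\<bar>) / \<nu>1"]) (auto elim!: eventually_mono)
qed

lemma nn_integral_one_plus_abs_powr_finite:
  fixes \<beta> :: real
  assumes b: "1 < \<beta>"
  shows "(\<integral>\<^sup>+x. ennreal ((1 + \<bar>x\<bar>) powr (- \<beta>)) \<partial>lborel) < \<infinity>"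
proof -
  define g where "g x = ennreal ((1 + x) powr (- \<beta>)) * indicator {0..} x" for x :: real
  have [measurable]: "g \<in> borel_measurable borel" unfolding g_def by measurable
  have "g x \<le> indicator {0..1} x + ennreal (x powr (- \<beta>)) * indicator {1..} x" for x
  proof (cases "x < 0 \<or> 1 < x")
    case True
    have "(1 + x) powr (- \<beta>) \<le> x powr (- \<beta>)" if "1 < x"
      using that b by (intro powr_mono2') auto
    then show ?thesis using True by (auto simp: g_def intro!: add_increasing ennreal_leI)
  next
    case False
    have "1 \<le> (1 + x) powr \<beta>" using False b by (intro ge_one_powr_ge_zero) auto
    then have "ennreal ((1 + x) powr (- \<beta>)) \<le> 1"
      by (simp add: powr_minus inverse_le_1_iff ennreal_le_1)
    then show ?thesis
      using False by (auto simp: g_def intro: order_trans[OF _ add_increasing2[OF zero_le order_refl]])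
  qed
  then have "(\<integral>\<^sup>+x. g x \<partial>lborel)
      \<le> (\<integral>\<^sup>+x. indicator {0..1::real} x \<partial>lborel) + (\<integral>\<^sup>+x. ennreal (x powr (- \<beta>)) * indicator {1..} x \<partial>lborel)"
    by (subst nn_integral_add[symmetric]) (auto intro!: nn_integral_mono)
  also have "(\<integral>\<^sup>+x. ennreal (x powr (- \<beta>)) * indicator {1..} x \<partial>lborel) = ennreal (- (1 powr (- \<beta> + 1)) / (- \<beta> + 1))"
    by (rule nn_integral_has_integral_lebesgue'[OF _ has_integral_powr_to_inf]) (use b in auto)
  finally have g_finite: "(\<integral>\<^sup>+x. g x \<partial>lborel) < \<infinity>"
    by (auto simp: less_top[symmetric] top_unique ennreal_add_eq_top)
  have "(\<integral>\<^sup>+x. ennreal ((1 + \<bar>x\<bar>) powr (- \<beta>)) \<partial>lborel) \<le> (\<integral>\<^sup>+x. g x + g (0 + (-1) * x) \<partial>lborel)"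
    by (intro nn_integral_mono) (auto simp: g_def indicator_def)
  also have "\<dots> = (\<integral>\<^sup>+x. g x \<partial>lborel) + (\<integral>\<^sup>+x. g (0 + (-1) * x) \<partial>lborel)"
    by (rule nn_integral_add) measurable
  also have "(\<integral>\<^sup>+x. g (0 + (-1) * x) \<partial>lborel) = (\<integral>\<^sup>+x. g x \<partial>lborel)"
    using nn_integral_real_affine[of g "-1" 0] by simp
  finally show ?thesis using g_finite by (auto simp: less_top[symmetric] top_unique ennreal_add_eq_top)
qed

lemma integrable_prod_one_plus_abs_powr:
  fixes \<beta> :: real
  assumes "1 < \<beta>"
  shows "integrable lborel (\<lambda>v::'v::euclidean_space. \<Prod>b\<in>Basis. (1 + \<bar>v \<bullet> b\<bar>) powr (- \<beta>))"
proof -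
  obtain c where "(\<integral>\<^sup>+x. ennreal ((1 + \<bar>x\<bar>) powr (- \<beta>)) \<partial>lborel) = ennreal c"
    using nn_integral_one_plus_abs_powr_finite[OF assms] by (cases rule: ennreal_cases) auto
  moreover have "(\<integral>\<^sup>+v. ennreal (norm (\<Prod>b\<in>Basis. (1 + \<bar>(v::'v) \<bullet> b\<bar>) powr (- \<beta>))) \<partial>lborel)
      = (\<Prod>b\<in>(Basis::'v set). (\<integral>\<^sup>+x. ennreal ((1 + \<bar>x\<bar>) powr (- \<beta>)) \<partial>lborel))"
    by (subst nn_integral_lborel_prod[symmetric, where f="\<lambda>b x. ennreal ((1 + \<bar>x\<bar>) powr (- \<beta>))"])
       (auto intro!: nn_integral_cong simp: prod_ennreal prod_nonneg abs_prod)
  ultimately have "(\<integral>\<^sup>+v. ennreal (norm (\<Prod>b\<in>Basis. (1 + \<bar>(v::'v) \<bullet> b\<bar>) powr (- \<beta>))) \<partial>lborel)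
      = ennreal c ^ DIM('v)"
    by simp
  then show ?thesis
    by (intro integrableI_bounded) (auto simp: power_less_top_ennreal)
qed

lemma norm_powr_le_prod_one_plus_abs_powr:
  fixes v :: "'v::euclidean_space" and s :: real
  assumes v: "1 \<le> norm v" and s: "0 \<le> s"
  shows "norm v powr (- s) \<le> 2 powr s * (\<Prod>b\<in>Basis. (1 + \<bar>v \<bullet> b\<bar>) powr (- (s / DIM('v))))"
proof -
  define d where "d = real DIM('v)"
  have d: "0 < d" unfolding d_def by simp
  have "1 + \<bar>v \<bullet> b\<bar> \<le> 2 * norm v" if "b \<in> Basis" for b
    using Basis_le_norm[OF that, of v] v by linarith
  then have "(\<Prod>b\<in>(Basis::'v set). 1 + \<bar>v \<bullet> b\<bar>) \<le> (2 * norm v) ^ DIM('v)"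
    using prod_mono[of Basis "\<lambda>b. 1 + \<bar>v \<bullet> b\<bar>" "\<lambda>_. 2 * norm v"] by simp
  then have "((2 * norm v) powr d) powr (- (s / d)) \<le> (\<Prod>b\<in>(Basis::'v set). 1 + \<bar>v \<bullet> b\<bar>) powr (- (s / d))"
    using v s d unfolding d_def
    by (subst powr_realpow) (auto intro!: powr_mono2' prod_pos simp: add_pos_nonneg)
  also have "\<dots> = (\<Prod>b\<in>Basis. (1 + \<bar>v \<bullet> b\<bar>) powr (- (s / d)))"
    by (rule prod_powr_distrib)
  finally have "2 powr (- s) * norm v powr (- s) \<le> (\<Prod>b\<in>Basis. (1 + \<bar>v \<bullet> b\<bar>) powr (- (s / d)))"
    using v d by (simp add: powr_powr powr_mult)
  from mult_left_mono[OF this, of "2 powr s"] show ?thesis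
    unfolding d_def by (simp add: mult.assoc[symmetric] powr_add[symmetric])
qed

text \<open>Decay of order \<open>d + \<alpha>\<close> with \<open>\<alpha> > 1\<close> leaves a tail \<open>|v|^(1 - d - \<alpha>)\<close>, which is dominated
  by a product of integrable one-dimensional tails.\<close>
lemma integrable_norm_mult_of_powr_tail:
  fixes M :: "'v::euclidean_space \<Rightarrow> real"
  assumes M: "integrable lborel M" "\<And>v. 0 \<le> M v" and a: "1 < \<alpha>"
    and tail: "((\<lambda>v. norm v powr (real DIM('v) + \<alpha>) * M v) \<longlongrightarrow> \<gamma>) at_infinity"
  shows "integrable lborel (\<lambda>v. norm v * M v)"
proof -
  define s where "s = real DIM('v) + \<alpha> - 1"
  define P where "P v = (\<Prod>b\<in>Basis. (1 + \<bar>v \<bullet> b\<bar>) powr (- (s / DIM('v))))" for v :: 'v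
  have P: "0 \<le> P v" for v
    unfolding P_def by (intro prod_nonneg) auto
  have s: "0 \<le> s" and b: "1 < s / DIM('v)" unfolding s_def using a by (auto simp: field_simps)
  have "\<forall>\<^sub>F v in at_infinity. norm v powr (real DIM('v) + \<alpha>) * M v < \<gamma> + 1"
    using tail by (rule order_tendstoD(2)) simp
  then obtain R where R: "1 \<le> R" "\<And>v. R \<le> norm v \<Longrightarrow> norm v powr (real DIM('v) + \<alpha>) * M v < \<gamma> + 1"
    unfolding eventually_at_infinity by (metis max.bounded_iff max.cobounded2)
  have bound: "norm v * M v \<le> R * M v + ((\<gamma> + 1) * 2 powr s) * P v" for v
  proof (cases "norm v < R")
    case True
    obtain u :: 'v where "norm u = R"
      using vector_choose_size[of R] R(1) by auto
    then have "0 \<le> \<gamma> + 1"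
      using R(2)[of u] M(2)[of u] by (smt (verit) mult_nonneg_nonneg powr_ge_zero)
    then have "0 \<le> (\<gamma> + 1) * 2 powr s * P v"
      using P by simp
    then show ?thesis using True M(2)[of v] mult_right_mono[of "norm v" R "M v"] by linarith
  next
    case False
    then have v: "1 \<le> norm v" "R \<le> norm v" using R(1) by auto
    have "norm v * M v = norm v powr (- s) * (norm v powr (real DIM('v) + \<alpha>) * M v)"
      using v by (simp add: s_def powr_minus powr_diff powr_add field_simps)
    also have "\<dots> \<le> 2 powr s * P v * (\<gamma> + 1)"
      using norm_powr_le_prod_one_plus_abs_powr[OF v(1) s] R(2)[OF v(2)] M(2)[of v] P[of v]
      unfolding P_def by (intro mult_mono) auto
    finally show ?thesis using R(1) M(2)[of v] by (simp add: ac_simps add_increasing)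
  qed
  have int: "integrable lborel (\<lambda>v. R * M v + ((\<gamma> + 1) * 2 powr s) * P v)"
    unfolding P_def using M(1) integrable_prod_one_plus_abs_powr[OF b]
    by (intro Bochner_Integration.integrable_add integrable_mult_right)
  have "norm (norm v * M v) \<le> norm (R * M v + ((\<gamma> + 1) * 2 powr s) * P v)" for v
    using bound[of v] M(2)[of v] by (smt (verit) norm_ge_zero mult_nonneg_nonneg real_norm_def)
  then show ?thesis
    by (intro Bochner_Integration.integrable_bound[OF int _ AE_I2]) (use M(1) in simp_all)
qed

lemma integrable_norm_mult_of_AE_le:
  fixes f :: "'v::euclidean_space \<Rightarrow> 'b::euclidean_space"
  assumes [measurable]: "f \<in> borel_measurable lborel"
    and f: "AE v in lborel. norm (f v) \<le> c * M v"
    and M: "\<And>v. 0 \<le> M v" "integrable lborel (\<lambda>v. norm v * M v)"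
  shows "integrable lborel (\<lambda>v. norm v * norm (f v))"
proof (rule Bochner_Integration.integrable_bound[OF integrable_mult_right[OF M(2), of c]])
  show "AE v in lborel. norm (norm v * norm (f v)) \<le> norm (c * (norm v * M v))"
    using f
  proof eventually_elim
    case (elim v)
    then have "norm v * norm (f v) \<le> c * (norm v * M v)"
      using mult_left_mono[OF elim norm_ge_zero[of v]] by (simp add: ac_simps)
    then show ?case
      by (simp add: abs_le_iff)
  qed
qed measurable

lemma nn_integral_indicator_translate:
  fixes K :: "'a::euclidean_space set"
  assumes [measurable]: "K \<in> sets borel"
  shows "(\<integral>\<^sup>+p. ennreal (indicator K (p + s)) \<partial>lborel) = emeasure lborel K"
proof -
  have "(\<integral>\<^sup>+p. ennreal (indicator K (p + s)) \<partial>lborel)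
      = (\<integral>\<^sup>+p. ennreal (indicator K p) \<partial>distr lborel borel ((+) s))"
    by (subst nn_integral_distr) (auto simp: add.commute)
  then show ?thesis by (simp add: lborel_distr_plus ennreal_indicator)
qed

lemma nn_integral_mult_indicator_add_translate:
  fixes K :: "'a::euclidean_space set"
  assumes [measurable]: "K \<in> sets borel"
  shows "(\<integral>\<^sup>+p. ennreal w * ennreal (indicator K p + indicator K (p + s)) \<partial>lborel)
      = ennreal w * (2 * emeasure lborel K)"
proof -
  have "(\<integral>\<^sup>+p. ennreal w * ennreal (indicator K p + indicator K (p + s)) \<partial>lborel)
      = (\<integral>\<^sup>+p. ennreal w * (ennreal (indicator K p) + ennreal (indicator K (p + s))) \<partial>lborel)"
    by (intro nn_integral_cong) (simp add: ennreal_plus)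
  also have "\<dots> = ennreal w * ((\<integral>\<^sup>+p. ennreal (indicator K p) \<partial>lborel)
      + (\<integral>\<^sup>+p. ennreal (indicator K (p + s)) \<partial>lborel))"
    by (subst nn_integral_add[symmetric]) (measurable, rule nn_integral_cmult, measurable)
  also have "\<dots> = ennreal w * (2 * emeasure lborel K)"
    by (subst nn_integral_indicator_translate) (simp_all add: mult_2 ennreal_indicator)
  finally show ?thesis .
qed

lemma nn_integral_weighted_indicator_add_translate:
  fixes W :: "'v::euclidean_space \<Rightarrow> real \<Rightarrow> real" and K :: "('v \<times> real) set"
  assumes [measurable]: "(\<lambda>(v, z). W v z) \<in> borel_measurable (lborel \<Otimes>\<^sub>M lborel)" "K \<in> sets borel"
  shows "(\<integral>\<^sup>+p. (\<integral>\<^sup>+v. (\<integral>\<^sup>+z. ennreal (W v z) * ennreal (indicator K p + indicator K (p + ((\<epsilon> * z) *\<^sub>R v, 0)))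
            \<partial>lborel) \<partial>lborel) \<partial>lborel)
       = (\<integral>\<^sup>+v. (\<integral>\<^sup>+z. ennreal (W v z) \<partial>lborel) \<partial>lborel) * (2 * emeasure lborel K)"
proof -
  have [measurable]: "(\<lambda>x. W (f x) (h x)) \<in> borel_measurable M"
    if [measurable]: "f \<in> measurable M lborel" "h \<in> measurable M lborel" for f h and M :: "'c measure"
    using measurable_compose[OF measurable_Pair[OF that] assms(1)] by simp
  have "(\<integral>\<^sup>+p. (\<integral>\<^sup>+v. (\<integral>\<^sup>+z. ennreal (W v z) * ennreal (indicator K p + indicator K (p + ((\<epsilon> * z) *\<^sub>R v, 0)))
            \<partial>lborel) \<partial>lborel) \<partial>lborel)
     = (\<integral>\<^sup>+v. (\<integral>\<^sup>+p. (\<integral>\<^sup>+z. ennreal (W v z) * ennreal (indicator K p + indicator K (p + ((\<epsilon> * z) *\<^sub>R v, 0)))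
            \<partial>lborel) \<partial>lborel) \<partial>lborel)"
    by (rule lborel_pair.Fubini'[symmetric]) measurable
  also have "\<dots> = (\<integral>\<^sup>+v. (\<integral>\<^sup>+z. (\<integral>\<^sup>+p. ennreal (W v z) * ennreal (indicator K p + indicator K (p + ((\<epsilon> * z) *\<^sub>R v, 0)))
            \<partial>lborel) \<partial>lborel) \<partial>lborel)"
    by (intro nn_integral_cong lborel_pair.Fubini') measurable
  also have "\<dots> = (\<integral>\<^sup>+v. (\<integral>\<^sup>+z. ennreal (W v z) * (2 * emeasure lborel K) \<partial>lborel) \<partial>lborel)"
    by (simp only: nn_integral_mult_indicator_add_translate[OF assms(2)])
  also have "\<dots> = (\<integral>\<^sup>+v. (\<integral>\<^sup>+z. ennreal (W v z) \<partial>lborel) \<partial>lborel) * (2 * emeasure lborel K)"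
    by (subst nn_integral_multc[symmetric], measurable, intro nn_integral_cong nn_integral_multc) measurable
  finally show ?thesis .
qed

lemma tendsto_nn_integral_mult_min_zero:
  fixes f :: "'v::euclidean_space \<Rightarrow> real"
  assumes [measurable]: "f \<in> borel_measurable lborel" and f: "\<And>v. 0 \<le> f v" "integrable lborel f"
    and c: "0 \<le> c"
  shows "((\<lambda>\<epsilon>. \<integral>\<^sup>+v. ennreal (f v * min 1 (c * \<epsilon> * norm v)) \<partial>lborel) \<longlongrightarrow> 0) (at_right 0)"
proof -
  define \<Psi> where "\<Psi> \<epsilon> = (\<integral>\<^sup>+v. ennreal (f v * min 1 (c * \<epsilon> * norm v)) \<partial>lborel)" for \<epsilon>
  define h where "h i v = ennreal (f v * min 1 (c * (1 / Suc i) * norm v))" for i v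
  have mono: "\<Psi> \<epsilon> \<le> \<Psi> \<delta>" if "0 \<le> \<epsilon>" "\<epsilon> \<le> \<delta>" for \<epsilon> \<delta>
    unfolding \<Psi>_def using that c f
    by (intro nn_integral_mono ennreal_leI mult_left_mono min.mono mult_right_mono) auto
  have dec: "decseq h"
    unfolding h_def using c f
    by (intro decseq_SucI le_funI ennreal_leI mult_left_mono min.mono mult_right_mono) (auto intro!: frac_le)
  have finite: "(\<integral>\<^sup>+ v. h i v \<partial>lborel) < \<infinity>" for i
  proof -
    have "(\<integral>\<^sup>+ v. h i v \<partial>lborel) \<le> (\<integral>\<^sup>+ v. ennreal (f v) \<partial>lborel)"
      unfolding h_def using f by (intro nn_integral_mono ennreal_leI) (auto intro!: mult_left_le)
    also have "\<dots> < \<infinity>" using f by (simp add: integrable_iff_bounded)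
    finally show ?thesis .
  qed
  have "(INF i. h i v) = 0" for v
  proof -
    have "(\<lambda>i. h i v) \<longlonglongrightarrow> (INF i. h i v)"
      by (rule LIMSEQ_INF, rule decseq_SucI) (use decseq_SucD[OF dec] in \<open>auto simp: le_fun_def\<close>)
    moreover have "(\<lambda>i. h i v) \<longlonglongrightarrow> ennreal (f v * min 1 (c * 0 * norm v))"
      unfolding h_def using LIMSEQ_Suc[OF lim_1_over_n] by (intro tendsto_ennrealI tendsto_intros) simp
    ultimately show ?thesis
      using LIMSEQ_unique by fastforce
  qed
  have "(INF i. \<Psi> (1 / Suc i)) = (\<integral>\<^sup>+ v. (INF i. h i v) \<partial>lborel)"
    unfolding \<Psi>_def h_def
    by (rule nn_integral_monotone_convergence_INF_decseq[symmetric, OF dec _ finite, unfolded h_def]) simp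
  then have "(INF i. \<Psi> (1 / Suc i)) = 0"
    using \<open>\<And>v. (INF i. h i v) = 0\<close> by simp
  show ?thesis unfolding \<Psi>_def[symmetric]
  proof (rule order_tendstoI)
    fix e :: ennreal
    assume "0 < e"
    then have "(INF i. \<Psi> (1 / Suc i)) < e"
      using \<open>(INF i. \<Psi> (1 / Suc i)) = 0\<close> by simp
    then obtain i where i: "\<Psi> (1 / Suc i) < e"
      unfolding INF_less_iff by blast
    show "\<forall>\<^sub>F \<epsilon> in at_right 0. \<Psi> \<epsilon> < e"
      unfolding eventually_at_right_field
      using le_less_trans[OF mono i] by (intro exI[of _ "1 / Suc i"]) auto
  qed simp
qed

section \<open>The diffusion approximation\<close>

lemma integrable_inner_scaleR:
  fixes lam :: "'v::euclidean_space \<Rightarrow> 'b::euclidean_space"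
  assumes [measurable]: "lam \<in> borel_measurable lborel"
    and lam: "integrable lborel (\<lambda>v. norm v * norm (lam v))"
  shows "integrable lborel (\<lambda>v. (v \<bullet> a) *\<^sub>R lam v)"
proof (rule Bochner_Integration.integrable_bound[OF integrable_mult_right[OF lam, of "norm a"]])
  show "AE v in lborel. norm ((v \<bullet> a) *\<^sub>R lam v) \<le> norm (norm a * (norm v * norm (lam v)))"
  proof (intro AE_I2)
    fix v
    have "\<bar>v \<bullet> a\<bar> * norm (lam v) \<le> (norm v * norm a) * norm (lam v)"
      by (intro mult_right_mono Cauchy_Schwarz_ineq2) auto
    then show "norm ((v \<bullet> a) *\<^sub>R lam v) \<le> norm (norm a * (norm v * norm (lam v)))"
      by (simp add: ac_simps)
  qed
qed measurable

locale diffusion_approximation = regular_profile \<phi> g K B0 B1 B2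
  for \<phi> :: "'v::euclidean_space \<Rightarrow> real \<Rightarrow> real" and g K B0 B1 B2 +
  fixes \<nu> :: "'v \<Rightarrow> real" and lam :: "'v \<Rightarrow> 'v" and \<nu>1 \<nu>2 :: real
  assumes measurable_\<nu>[measurable]: "\<nu> \<in> borel_measurable lborel"
    and \<nu>_bounds: "\<And>v. \<nu>1 \<le> \<nu> v \<and> \<nu> v \<le> \<nu>2" and \<nu>1_pos: "0 < \<nu>1"
    and measurable_lam[measurable]: "lam \<in> borel_measurable lborel"
    and integrable_norm_lam: "integrable lborel (\<lambda>v. norm (lam v))"
    and integrable_norm_mult_norm_lam: "integrable lborel (\<lambda>v. norm v * norm (lam v))"
begin

definition flux :: "real \<Rightarrow> 'v \<times> real \<Rightarrow> 'v" where
  "flux \<epsilon> = (\<lambda>(x, t). (1 / \<epsilon>) *\<^sub>R (\<integral>v. (\<nu> v * (chi \<nu> \<phi> \<epsilon> x v t - \<phi> x t)) *\<^sub>R lam v \<partial>lborel))"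

definition flux_limit :: "'v \<times> real \<Rightarrow> 'v" where
  "flux_limit = (\<lambda>(x, t). \<integral>v. (v \<bullet> g x t) *\<^sub>R lam v \<partial>lborel)"

definition error_density :: "real \<Rightarrow> 'v \<Rightarrow> real \<Rightarrow> real" where
  "error_density \<epsilon> v z = norm (lam v) * \<nu> v * exp_kernel (\<nu> v) z * remainder_weight \<epsilon> z v"

definition error_mass :: "real \<Rightarrow> ennreal" where
  "error_mass \<epsilon> = (\<integral>\<^sup>+v. (\<integral>\<^sup>+z. ennreal (error_density \<epsilon> v z) \<partial>lborel) \<partial>lborel)"

definition error_bound :: "real \<Rightarrow> 'v \<times> real \<Rightarrow> ennreal" where
  "error_bound \<epsilon> p = (\<integral>\<^sup>+v. (\<integral>\<^sup>+z. ennreal (error_density \<epsilon> v z)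
      * ennreal (indicator K p + indicator K (p + ((\<epsilon> * z) *\<^sub>R v, 0))) \<partial>lborel) \<partial>lborel)"

lemma \<nu>_pos: "0 < \<nu> v"
  using \<nu>_bounds[of v] \<nu>1_pos by linarith

lemma \<nu>2_pos: "0 < \<nu>2"
  using \<nu>_bounds \<nu>_pos by (meson less_le_trans)

lemma B0_nonneg: "0 \<le> B0"
  using bounded[of 0 0] by linarith

lemma sets_K[measurable]: "K \<in> sets borel"
  using compact_support by (simp add: compact_imp_closed)

lemma measurable_profile[measurable]: "(\<lambda>y. \<phi> y t) \<in> borel_measurable borel"
  using continuous_on_profile by (rule borel_measurable_continuous_onI)

lemma measurable_error_density[measurable]:
  "(\<lambda>(v, z). error_density \<epsilon> v z) \<in> borel_measurable (lborel \<Otimes>\<^sub>M lborel)"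
  unfolding error_density_def remainder_weight_def by measurable

lemma abs_chi_le: "\<bar>chi \<nu> \<phi> \<epsilon> x v t\<bar> \<le> B0"
proof -
  have "\<bar>chi \<nu> \<phi> \<epsilon> x v t\<bar> \<le> (\<integral>z. \<bar>exp_kernel (\<nu> v) z * \<phi> (x + (\<epsilon> * z) *\<^sub>R v) t\<bar> \<partial>lborel)"
    unfolding chi_eq_exp_kernel by (rule integral_abs_bound)
  also have "\<dots> \<le> (\<integral>z. B0 * exp_kernel (\<nu> v) z \<partial>lborel)"
  proof (rule integral_mono)
    show "integrable lborel (\<lambda>z. \<bar>exp_kernel (\<nu> v) z * \<phi> (x + (\<epsilon> * z) *\<^sub>R v) t\<bar>)"
      by (intro integrable_abs integrable_exp_kernel_mult[OF \<nu>_pos _ bounded]) measurable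
    show "integrable lborel (\<lambda>z. B0 * exp_kernel (\<nu> v) z)"
      using integrable_exp_kernel_moment[OF \<nu>_pos, of v 0] by simp
    show "\<bar>exp_kernel (\<nu> v) z * \<phi> (x + (\<epsilon> * z) *\<^sub>R v) t\<bar> \<le> B0 * exp_kernel (\<nu> v) z" for z
      using mult_left_mono[OF bounded[of "x + (\<epsilon> * z) *\<^sub>R v" t]
          exp_kernel_nonneg[OF less_imp_le[OF \<nu>_pos[of v]], of z]]
        exp_kernel_nonneg[OF less_imp_le[OF \<nu>_pos[of v]], of z]
      by (simp add: abs_mult mult.commute[of B0])
  qed
  also have "\<dots> = B0"
    using integral_exp_kernel_moment[OF \<nu>_pos, of v 0] by simp
  finally show ?thesis .
qed

lemma integrable_flux_integrand:
  "integrable lborel (\<lambda>v. (\<nu> v * (chi \<nu> \<phi> \<epsilon> x v t - \<phi> x t)) *\<^sub>R lam v)"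
proof (rule Bochner_Integration.integrable_bound[OF integrable_mult_right[OF integrable_norm_lam, of "\<nu>2 * (2 * B0)"]])
  show "AE v in lborel. norm ((\<nu> v * (chi \<nu> \<phi> \<epsilon> x v t - \<phi> x t)) *\<^sub>R lam v) \<le> norm (\<nu>2 * (2 * B0) * norm (lam v))"
  proof (intro AE_I2)
    fix v
    have "\<bar>\<nu> v * (chi \<nu> \<phi> \<epsilon> x v t - \<phi> x t)\<bar> \<le> \<nu>2 * (2 * B0)"
      unfolding abs_mult using \<nu>_bounds[of v] \<nu>_pos[of v] abs_chi_le[of \<epsilon> x v t] bounded[of x t]
      by (intro mult_mono) auto
    then show "norm ((\<nu> v * (chi \<nu> \<phi> \<epsilon> x v t - \<phi> x t)) *\<^sub>R lam v) \<le> norm (\<nu>2 * (2 * B0) * norm (lam v))"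
      using B0_nonneg \<nu>2_pos by (simp add: abs_mult mult_right_mono)
  qed
qed (unfold chi_eq_exp_kernel, measurable)

lemma abs_flux_integrand_error_le:
  assumes e: "0 < \<epsilon>"
  shows "ennreal \<bar>(1 / \<epsilon>) * (\<nu> v * (chi \<nu> \<phi> \<epsilon> x v t - \<phi> x t)) - v \<bullet> g x t\<bar>
    \<le> ennreal (\<nu> v) * (\<integral>\<^sup>+z. ennreal (exp_kernel (\<nu> v) z * remainder_weight \<epsilon> z v)
          * ennreal (indicator K (x, t) + indicator K (x + (\<epsilon> * z) *\<^sub>R v, t)) \<partial>lborel)"
proof -
  have "ennreal \<bar>(1 / \<epsilon>) * (\<nu> v * (chi \<nu> \<phi> \<epsilon> x v t - \<phi> x t)) - v \<bullet> g x t\<bar>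
    \<le> ennreal (\<nu> v) * (\<integral>\<^sup>+z. ennreal (exp_kernel (\<nu> v) z *
         \<bar>(\<phi> (x + (\<epsilon> * z) *\<^sub>R v) t - \<phi> x t) / \<epsilon> - z * (v \<bullet> g x t)\<bar>) \<partial>lborel)"
    using exp_kernel_average_deviation_le[where \<psi>="\<lambda>z. \<phi> (x + (\<epsilon> * z) *\<^sub>R v) t"
        and c="\<phi> x t" and s="v \<bullet> g x t", OF \<nu>_pos e _ bounded]
    unfolding chi_eq_exp_kernel by simp
  also have "\<dots> \<le> ennreal (\<nu> v) * (\<integral>\<^sup>+z. ennreal (exp_kernel (\<nu> v) z * remainder_weight \<epsilon> z v)
          * ennreal (indicator K (x, t) + indicator K (x + (\<epsilon> * z) *\<^sub>R v, t)) \<partial>lborel)"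
  proof (intro mult_left_mono nn_integral_mono)
    fix z :: real
    show "ennreal (exp_kernel (\<nu> v) z * \<bar>(\<phi> (x + (\<epsilon> * z) *\<^sub>R v) t - \<phi> x t) / \<epsilon> - z * (v \<bullet> g x t)\<bar>)
       \<le> ennreal (exp_kernel (\<nu> v) z * remainder_weight \<epsilon> z v)
          * ennreal (indicator K (x, t) + indicator K (x + (\<epsilon> * z) *\<^sub>R v, t))"
    proof (cases "0 \<le> z")
      case True
      have "exp_kernel (\<nu> v) z * \<bar>(\<phi> (x + (\<epsilon> * z) *\<^sub>R v) t - \<phi> x t) / \<epsilon> - z * (v \<bullet> g x t)\<bar>
         \<le> exp_kernel (\<nu> v) z * remainder_weight \<epsilon> z v
             * (indicator K (x, t) + indicator K (x + (\<epsilon> * z) *\<^sub>R v, t))"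
        using mult_left_mono[OF difference_quotient_remainder_le[OF e True]
            exp_kernel_nonneg[OF less_imp_le[OF \<nu>_pos]]]
        by (simp add: ac_simps)
      then show ?thesis
        using True e \<nu>_pos[of v]
        by (simp add: ennreal_mult[symmetric] exp_kernel_nonneg remainder_weight_nonneg
            del: ennreal_plus)
    qed (simp add: exp_kernel_def)
  qed simp
  finally show ?thesis .
qed

lemma norm_flux_error_integrand_le:
  assumes e: "0 < \<epsilon>"
  shows "ennreal (norm (((1 / \<epsilon>) * (\<nu> v * (chi \<nu> \<phi> \<epsilon> x v t - \<phi> x t)) - v \<bullet> g x t) *\<^sub>R lam v))
    \<le> (\<integral>\<^sup>+z. ennreal (error_density \<epsilon> v z)
          * ennreal (indicator K (x, t) + indicator K ((x, t) + ((\<epsilon> * z) *\<^sub>R v, 0))) \<partial>lborel)"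
    (is "_ \<le> ?rhs")
proof -
  let ?w = "\<lambda>z. ennreal (exp_kernel (\<nu> v) z * remainder_weight \<epsilon> z v)
      * ennreal (indicator K (x, t) + indicator K (x + (\<epsilon> * z) *\<^sub>R v, t))"
  have "ennreal (norm (((1 / \<epsilon>) * (\<nu> v * (chi \<nu> \<phi> \<epsilon> x v t - \<phi> x t)) - v \<bullet> g x t) *\<^sub>R lam v))
      = ennreal (norm (lam v)) * ennreal \<bar>(1 / \<epsilon>) * (\<nu> v * (chi \<nu> \<phi> \<epsilon> x v t - \<phi> x t)) - v \<bullet> g x t\<bar>"
    by (simp add: ennreal_mult' mult.commute)
  also have "\<dots> \<le> ennreal (norm (lam v)) * (ennreal (\<nu> v) * (\<integral>\<^sup>+z. ?w z \<partial>lborel))"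
    by (intro mult_left_mono abs_flux_integrand_error_le e) simp
  also have "\<dots> = ennreal (norm (lam v) * \<nu> v) * (\<integral>\<^sup>+z. ?w z \<partial>lborel)"
    using \<nu>_pos[of v] by (simp add: ennreal_mult mult.assoc)
  also have "\<dots> = (\<integral>\<^sup>+z. ennreal (norm (lam v) * \<nu> v) * ?w z \<partial>lborel)"
    by (rule nn_integral_cmult[symmetric]) (unfold remainder_weight_def, measurable)
  also have "\<dots> = ?rhs"
    unfolding error_density_def using \<nu>_pos[of v]
    by (intro nn_integral_cong) (simp add: ennreal_mult' mult.assoc)
  finally show ?thesis .
qed

lemma flux_sub_flux_limit_eq:
  "flux \<epsilon> (x, t) - flux_limit (x, t)
    = (\<integral>v. ((1 / \<epsilon>) * (\<nu> v * (chi \<nu> \<phi> \<epsilon> x v t - \<phi> x t)) - v \<bullet> g x t) *\<^sub>R lam v \<partial>lborel)"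
  and integrable_flux_error_integrand:
  "integrable lborel (\<lambda>v. ((1 / \<epsilon>) * (\<nu> v * (chi \<nu> \<phi> \<epsilon> x v t - \<phi> x t)) - v \<bullet> g x t) *\<^sub>R lam v)"
proof -
  have drift: "integrable lborel (\<lambda>v. (v \<bullet> g x t) *\<^sub>R lam v)"
    by (rule integrable_inner_scaleR[OF measurable_lam integrable_norm_mult_norm_lam])
  have flux: "integrable lborel (\<lambda>v. ((1 / \<epsilon>) * (\<nu> v * (chi \<nu> \<phi> \<epsilon> x v t - \<phi> x t))) *\<^sub>R lam v)"
    using integrable_scaleR_right[OF integrable_flux_integrand, of "1 / \<epsilon>"] by simp
  have "(1 / \<epsilon>) *\<^sub>R (\<integral>v. (\<nu> v * (chi \<nu> \<phi> \<epsilon> x v t - \<phi> x t)) *\<^sub>R lam v \<partial>lborel)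
      = (\<integral>v. ((1 / \<epsilon>) * (\<nu> v * (chi \<nu> \<phi> \<epsilon> x v t - \<phi> x t))) *\<^sub>R lam v \<partial>lborel)"
    by (simp only: integral_scaleR_right[symmetric] scaleR_scaleR)
  then show "flux \<epsilon> (x, t) - flux_limit (x, t)
    = (\<integral>v. ((1 / \<epsilon>) * (\<nu> v * (chi \<nu> \<phi> \<epsilon> x v t - \<phi> x t)) - v \<bullet> g x t) *\<^sub>R lam v \<partial>lborel)"
    unfolding flux_def flux_limit_def scaleR_left_diff_distrib
    by (simp only: Bochner_Integration.integral_diff[OF flux drift] prod.case)
  show "integrable lborel (\<lambda>v. ((1 / \<epsilon>) * (\<nu> v * (chi \<nu> \<phi> \<epsilon> x v t - \<phi> x t)) - v \<bullet> g x t) *\<^sub>R lam v)"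
    unfolding scaleR_left_diff_distrib by (intro Bochner_Integration.integrable_diff flux drift)
qed

lemma norm_flux_sub_flux_limit_le:
  assumes e: "0 < \<epsilon>"
  shows "ennreal (norm (flux \<epsilon> p - flux_limit p)) \<le> error_bound \<epsilon> p"
proof (cases p)
  case (Pair x t)
  show ?thesis
    unfolding Pair error_bound_def flux_sub_flux_limit_eq
    by (intro order_trans[OF integral_norm_bound_ennreal[OF integrable_flux_error_integrand]]
        nn_integral_mono norm_flux_error_integrand_le e)
qed

lemma error_bound_le_error_mass: "error_bound \<epsilon> p \<le> 2 * error_mass \<epsilon>"
proof -
  have "error_bound \<epsilon> p \<le> (\<integral>\<^sup>+v. (\<integral>\<^sup>+z. 2 * ennreal (error_density \<epsilon> v z) \<partial>lborel) \<partial>lborel)"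
    unfolding error_bound_def
  proof (intro nn_integral_mono)
    fix v z
    have "ennreal (indicator K p + indicator K (p + ((\<epsilon> * z) *\<^sub>R v, 0))) \<le> 2"
      by (auto simp: indicator_def)
    then show "ennreal (error_density \<epsilon> v z) * ennreal (indicator K p + indicator K (p + ((\<epsilon> * z) *\<^sub>R v, 0)))
        \<le> 2 * ennreal (error_density \<epsilon> v z)"
      by (metis mult.commute mult_left_mono zero_le)
  qed
  also have "\<dots> = 2 * error_mass \<epsilon>"
    unfolding error_mass_def
    by (subst nn_integral_cmult[symmetric], measurable, intro nn_integral_cong nn_integral_cmult) measurable
  finally show ?thesis .
qed

lemma nn_integral_error_bound:
  "(\<integral>\<^sup>+p. error_bound \<epsilon> p \<partial>lborel) = error_mass \<epsilon> * (2 * emeasure lborel K)"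
  unfolding error_bound_def error_mass_def
  by (rule nn_integral_weighted_indicator_add_translate) measurable

text \<open>The first two moments \<open>1 / \<nu>\<close> and \<open>2 / \<nu>\<^sup>2\<close> of the kernel absorb the factor \<open>z + z\<^sup>2\<close>
  of the weight.\<close>
lemma nn_integral_error_density_le:
  assumes e: "0 < \<epsilon>"
  shows "(\<integral>\<^sup>+z. ennreal (error_density \<epsilon> v z) \<partial>lborel)
    \<le> ennreal (2 * B1 * (1 + 2 / \<nu>1)) * ennreal (norm (lam v) * norm v * min 1 (B2 / (2 * B1) * \<epsilon> * norm v))"
proof -
  let ?m = "norm (lam v) * norm v * min 1 (B2 / (2 * B1) * \<epsilon> * norm v)"
  define a where "a = \<nu> v"
  have a: "0 < a" "\<nu>1 \<le> a" using \<nu>_bounds[of v] \<nu>_pos[of v] unfolding a_def by auto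
  define c where "c = 2 * B1 * a * ?m"
  have c: "0 \<le> c" unfolding c_def using a B1_pos B2_pos e by auto
  have "(\<integral>\<^sup>+z. ennreal (error_density \<epsilon> v z) \<partial>lborel)
      = (\<integral>\<^sup>+z. ennreal c * (ennreal (exp_kernel a z * z ^ 1) + ennreal (exp_kernel a z * z ^ 2)) \<partial>lborel)"
  proof (intro nn_integral_cong)
    fix z
    have "0 \<le> exp_kernel a z * z ^ 1" "0 \<le> exp_kernel a z * z ^ 2"
      using a by (auto simp: exp_kernel_def indicator_def)
    moreover have "error_density \<epsilon> v z = c * (exp_kernel a z * z ^ 1 + exp_kernel a z * z ^ 2)"
      unfolding error_density_def remainder_weight_def c_def a_def by (simp add: algebra_simps)
    ultimately show "ennreal (error_density \<epsilon> v z)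
        = ennreal c * (ennreal (exp_kernel a z * z ^ 1) + ennreal (exp_kernel a z * z ^ 2))"
      using c by (simp add: ennreal_mult flip: ennreal_plus)
  qed
  also have "\<dots> = ennreal c * ((\<integral>\<^sup>+z. ennreal (exp_kernel a z * z ^ 1) \<partial>lborel)
      + (\<integral>\<^sup>+z. ennreal (exp_kernel a z * z ^ 2) \<partial>lborel))"
    by (subst nn_integral_add[symmetric]) (measurable, rule nn_integral_cmult, measurable)
  also have "\<dots> = ennreal (c * (1 / a + 2 / a\<^sup>2))"
    using a c nn_integral_exp_kernel_moment[OF a(1), of 1] nn_integral_exp_kernel_moment[OF a(1), of 2]
    by (simp add: ennreal_mult flip: ennreal_plus)
  also have "c * (1 / a + 2 / a\<^sup>2) = 2 * B1 * (1 + 2 / a) * ?m"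
    unfolding c_def using a by (simp add: field_simps power2_eq_square)
  also have "\<dots> \<le> ennreal (2 * B1 * (1 + 2 / \<nu>1) * ?m)"
    using a \<nu>1_pos B1_pos B2_pos e
    by (intro ennreal_leI mult_right_mono mult_left_mono add_left_mono divide_left_mono) auto
  also have "\<dots> = ennreal (2 * B1 * (1 + 2 / \<nu>1)) * ennreal ?m"
    using B1_pos \<nu>1_pos by (intro ennreal_mult') simp
  finally show ?thesis .
qed

lemma error_mass_le:
  assumes e: "0 < \<epsilon>"
  shows "error_mass \<epsilon> \<le> ennreal (2 * B1 * (1 + 2 / \<nu>1))
      * (\<integral>\<^sup>+v. ennreal (norm (lam v) * norm v * min 1 (B2 / (2 * B1) * \<epsilon> * norm v)) \<partial>lborel)"
proof -
  have "error_mass \<epsilon> \<le> (\<integral>\<^sup>+v. ennreal (2 * B1 * (1 + 2 / \<nu>1))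
      * ennreal (norm (lam v) * norm v * min 1 (B2 / (2 * B1) * \<epsilon> * norm v)) \<partial>lborel)"
    unfolding error_mass_def by (intro nn_integral_mono nn_integral_error_density_le e)
  also have "\<dots> = ennreal (2 * B1 * (1 + 2 / \<nu>1))
      * (\<integral>\<^sup>+v. ennreal (norm (lam v) * norm v * min 1 (B2 / (2 * B1) * \<epsilon> * norm v)) \<partial>lborel)"
    by (rule nn_integral_cmult) measurable
  finally show ?thesis .
qed

lemma error_mass_tendsto_zero: "(error_mass \<longlongrightarrow> 0) (at_right 0)"
proof (rule tendsto_sandwich[of "\<lambda>_. 0" _ _ "\<lambda>\<epsilon>. ennreal (2 * B1 * (1 + 2 / \<nu>1))
    * (\<integral>\<^sup>+v. ennreal (norm (lam v) * norm v * min 1 (B2 / (2 * B1) * \<epsilon> * norm v)) \<partial>lborel)"])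
  show "\<forall>\<^sub>F \<epsilon> in at_right 0. error_mass \<epsilon> \<le> ennreal (2 * B1 * (1 + 2 / \<nu>1))
    * (\<integral>\<^sup>+v. ennreal (norm (lam v) * norm v * min 1 (B2 / (2 * B1) * \<epsilon> * norm v)) \<partial>lborel)"
    using eventually_at_right_less[of "0::real"] by eventually_elim (rule error_mass_le)
  have "((\<lambda>\<epsilon>. \<integral>\<^sup>+v. ennreal (norm (lam v) * norm v * min 1 (B2 / (2 * B1) * \<epsilon> * norm v)) \<partial>lborel)
      \<longlongrightarrow> 0) (at_right 0)"
    using integrable_norm_mult_norm_lam B1_pos B2_pos
    by (intro tendsto_nn_integral_mult_min_zero) (simp_all add: mult.commute)
  from ennreal_tendsto_cmult[OF _ this]
  show "((\<lambda>\<epsilon>. ennreal (2 * B1 * (1 + 2 / \<nu>1))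
    * (\<integral>\<^sup>+v. ennreal (norm (lam v) * norm v * min 1 (B2 / (2 * B1) * \<epsilon> * norm v)) \<partial>lborel)) \<longlongrightarrow> 0)
    (at_right 0)"
    by simp
qed auto

lemma uniform_limit_flux: "uniform_limit S flux flux_limit (at_right 0)"
proof (rule uniform_limitI)
  fix e :: real
  assume e: "0 < e"
  have "\<forall>\<^sub>F \<epsilon> in at_right 0. 2 * error_mass \<epsilon> < ennreal e"
    using ennreal_tendsto_cmult[OF _ error_mass_tendsto_zero, of 2] e
    by (intro order_tendstoD(2)) auto
  then show "\<forall>\<^sub>F \<epsilon> in at_right 0. \<forall>p\<in>S. dist (flux \<epsilon> p) (flux_limit p) < e"
    using eventually_at_right_less[of "0::real"]
  proof eventually_elim
    case (elim \<epsilon>)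
    have "ennreal (norm (flux \<epsilon> p - flux_limit p)) < ennreal e" for p
      using norm_flux_sub_flux_limit_le[OF elim(2), of p] error_bound_le_error_mass[of \<epsilon> p] elim(1)
      by (meson order_le_less_trans)
    then show ?case
      by (simp add: dist_norm ennreal_less_iff)
  qed
qed

lemma L2_flux_tendsto_zero:
  "((\<lambda>\<epsilon>. \<integral>\<^sup>+p\<in>S. ennreal ((norm (flux \<epsilon> p - flux_limit p))\<^sup>2) \<partial>lborel) \<longlongrightarrow> 0) (at_right 0)"
proof (rule tendsto_sandwich[of "\<lambda>_. 0" _ _ "\<lambda>\<epsilon>. (4 * emeasure lborel K) * (error_mass \<epsilon> * error_mass \<epsilon>)"])
  show "\<forall>\<^sub>F \<epsilon> in at_right 0. (\<integral>\<^sup>+p\<in>S. ennreal ((norm (flux \<epsilon> p - flux_limit p))\<^sup>2) \<partial>lborel)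
      \<le> (4 * emeasure lborel K) * (error_mass \<epsilon> * error_mass \<epsilon>)"
    using eventually_at_right_less[of "0::real"]
  proof eventually_elim
    case (elim \<epsilon>)
    have "(\<integral>\<^sup>+p\<in>S. ennreal ((norm (flux \<epsilon> p - flux_limit p))\<^sup>2) \<partial>lborel)
        \<le> (\<integral>\<^sup>+p. error_bound \<epsilon> p * (2 * error_mass \<epsilon>) \<partial>lborel)"
    proof (intro nn_integral_mono)
      fix p
      have "ennreal ((norm (flux \<epsilon> p - flux_limit p))\<^sup>2)
          = ennreal (norm (flux \<epsilon> p - flux_limit p)) * ennreal (norm (flux \<epsilon> p - flux_limit p))"
        by (simp add: power2_eq_square ennreal_mult)
      also have "\<dots> \<le> error_bound \<epsilon> p * (2 * error_mass \<epsilon>)"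
        using order_trans[OF norm_flux_sub_flux_limit_le[OF elim] error_bound_le_error_mass]
        by (intro mult_mono norm_flux_sub_flux_limit_le[OF elim]) auto
      finally show "ennreal ((norm (flux \<epsilon> p - flux_limit p))\<^sup>2) * indicator S p
          \<le> error_bound \<epsilon> p * (2 * error_mass \<epsilon>)"
        by (auto simp: indicator_def)
    qed
    also have "\<dots> = (\<integral>\<^sup>+p. error_bound \<epsilon> p \<partial>lborel) * (2 * error_mass \<epsilon>)"
      by (rule nn_integral_multc) (unfold error_bound_def, measurable)
    also have "\<dots> = (4 * emeasure lborel K) * (error_mass \<epsilon> * error_mass \<epsilon>)"
      by (simp add: nn_integral_error_bound ac_simps)
    finally show ?case .
  qed
  have "emeasure lborel K < \<infinity>"
    using compact_support by (rule emeasure_compact_finite)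
  then show "((\<lambda>\<epsilon>. (4 * emeasure lborel K) * (error_mass \<epsilon> * error_mass \<epsilon>)) \<longlongrightarrow> 0) (at_right 0)"
    using ennreal_tendsto_cmult[OF _ tendsto_mult_ennreal[OF error_mass_tendsto_zero error_mass_tendsto_zero],
        of "4 * emeasure lborel K"]
    by (simp add: ennreal_mult_less_top)
qed auto

end

lemma integral_inner_scaleR_eq_DT_apply:
  fixes lam :: "'v::euclidean_space \<Rightarrow> 'v"
  assumes [measurable]: "lam \<in> borel_measurable lborel"
    and lam: "integrable lborel (\<lambda>v. norm v * norm (lam v))"
  shows "(\<integral>v. (v \<bullet> a) *\<^sub>R lam v \<partial>lborel) = DT_apply lam a"
proof (rule euclidean_eqI)
  fix j :: 'v
  assume j: "j \<in> Basis"
  have int: "integrable lborel (\<lambda>v. (v \<bullet> i) * (lam v \<bullet> j))" if "i \<in> Basis" for i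
  proof (rule Bochner_Integration.integrable_bound[OF lam])
    show "AE v in lborel. norm ((v \<bullet> i) * (lam v \<bullet> j)) \<le> norm (norm v * norm (lam v))"
      using Basis_le_norm[OF that] Basis_le_norm[OF j] by (auto intro!: AE_I2 mult_mono simp: abs_mult)
  qed measurable
  have "(\<integral>v. (v \<bullet> a) *\<^sub>R lam v \<partial>lborel) \<bullet> j = (\<integral>v. ((v \<bullet> a) *\<^sub>R lam v) \<bullet> j \<partial>lborel)"
    by (intro integral_inner_left[symmetric] integrable_inner_scaleR lam) measurable
  also have "\<dots> = (\<integral>v. (\<Sum>i\<in>Basis. (a \<bullet> i) * ((v \<bullet> i) * (lam v \<bullet> j))) \<partial>lborel)"
    by (intro Bochner_Integration.integral_cong refl)
       (simp add: euclidean_inner[of _ a] sum_distrib_left sum_distrib_right ac_simps)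
  also have "\<dots> = (\<Sum>i\<in>Basis. (a \<bullet> i) * (\<integral>v. (v \<bullet> i) * (lam v \<bullet> j) \<partial>lborel))"
    using int by (simp add: Bochner_Integration.integral_sum)
  also have "\<dots> = DT_apply lam a \<bullet> j"
    unfolding DT_apply_def Dmat_def using j
    by (simp add: inner_sum_left inner_Basis ac_simps if_distrib sum.If_cases)
  finally show "(\<integral>v. (v \<bullet> a) *\<^sub>R lam v \<partial>lborel) \<bullet> j = DT_apply lam a \<bullet> j" .
qed

theorem lemma4p6:
  fixes M :: "'v::euclidean_space \<Rightarrow> real"
    and gradM :: "'v \<Rightarrow> 'v"
    and HM :: "'v \<Rightarrow> 'v \<Rightarrow> 'v"
    and \<sigma> :: "'v \<Rightarrow> 'v \<Rightarrow> real"
    and lam :: "'v \<Rightarrow> 'v"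
    and \<phi> :: "'v \<Rightarrow> real \<Rightarrow> real"
    and \<alpha> \<gamma> C \<nu>0 \<nu>1 \<nu>2 :: real
  assumes alpha: "1 < \<alpha>" "\<alpha> < 2"
    and M_pos: "\<And>v. M v > 0"
    and M_even: "\<And>v. M (- v) = M v"
    and M_int: "integrable lborel M" "(\<integral>v. M v \<partial>lborel) = 1"
    and M_tail: "\<gamma> > 0" "((\<lambda>v. norm v powr (real DIM('v) + \<alpha>) * M v) \<longlongrightarrow> \<gamma>) at_infinity"
    and M_grad: "\<And>v. (M has_derivative (\<lambda>h. gradM v \<bullet> h)) (at v)"
    and M_grad_bound: "\<And>v. norm (gradM v) \<le> C * M v / (1 + norm v)"
    and M_hess: "\<And>v. (gradM has_derivative HM v) (at v)"
    and M_hess_bound: "\<And>v h. norm (HM v h) \<le> C * M v * norm h"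
    and sigma_meas: "(\<lambda>p. \<sigma> (fst p) (snd p)) \<in> borel_measurable borel"
    and sigma_sym: "\<And>v v'. \<sigma> v v' = \<sigma> v' v"
    and sigma_bounds: "0 < \<nu>1" "\<nu>1 \<le> \<nu>2" "\<And>v v'. \<nu>1 \<le> \<sigma> v v' \<and> \<sigma> v v' \<le> \<nu>2"
    and sigma_grad: "\<And>v v'. \<exists>D. (\<sigma> v' has_derivative D) (at v) \<and>
                        (\<forall>h. \<bar>D h\<bar> \<le> C / (1 + norm v) * norm h)"
    and sigma_lim: "\<And>v v'. \<bar>\<sigma> v v' - \<nu>0\<bar> \<le> C / (1 + norm v)"
    and nu_even: "\<And>v. coll_freq \<sigma> M (- v) = coll_freq \<sigma> M v"
    and lambda_meas: "lam \<in> borel_measurable lborel"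
    and lambda_L2: "integrable lborel (\<lambda>v. (norm (lam v))\<^sup>2 / M v)"
    and lambda_eq: "AE v in lborel. Qop \<sigma> M lam v = gradM v"
    and lambda_mean: "(\<integral>v. lam v \<partial>lborel) = 0"
    and phi: "test_function \<phi>"
  defines "\<nu> \<equiv> coll_freq \<sigma> M"
  defines "F \<equiv> (\<lambda>\<epsilon> (x, t). (1 / \<epsilon>) *\<^sub>R
              (\<integral>v. (\<nu> v * (chi \<nu> \<phi> \<epsilon> x v t - \<phi> x t)) *\<^sub>R lam v \<partial>lborel))"
  defines "G \<equiv> (\<lambda>(x, t). (\<integral>v. (v \<bullet> gradx \<phi> x t) *\<^sub>R lam v \<partial>lborel))"
  shows "(\<forall>x t. G (x, t) = DT_apply lam (gradx \<phi> x t))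
       \<and> uniform_limit (UNIV \<times> {0<..}) F G (at_right 0)
       \<and> ((\<lambda>\<epsilon>. \<integral>\<^sup>+ p \<in> UNIV \<times> {0<..}. ennreal ((norm (F \<epsilon> p - G p))\<^sup>2) \<partial>lborel)
            \<longlongrightarrow> 0) (at_right 0)"
proof -
  have "continuous_on UNIV M"
    by (intro continuous_at_imp_continuous_on ballI has_derivative_continuous[OF M_grad])
  then have M_measurable: "M \<in> borel_measurable lborel"
    using borel_measurable_continuous_onI by simp
  have lam_L1: "integrable lborel (\<lambda>v. norm (lam v))"
    by (rule integrable_norm_of_integrable_norm_sq_div[OF lambda_meas lambda_L2 M_int(1) M_pos])
  obtain c where "AE v in lborel. norm (lam v) \<le> c * M v"
    using Qop_solution_le_mult[OF sigma_meas sigma_bounds(1,3) M_pos M_int M_grad_bound lambda_meas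
        lam_L1 lambda_eq] .
  then have lam_moment: "integrable lborel (\<lambda>v. norm v * norm (lam v))"
    using M_pos integrable_norm_mult_of_powr_tail[OF M_int(1) _ alpha(1) M_tail(2)]
    by (intro integrable_norm_mult_of_AE_le[OF lambda_meas]) (auto intro: less_imp_le)
  obtain K B0 B1 B2 where profile: "regular_profile \<phi> (gradx \<phi>) K B0 B1 B2"
    using test_function_regular_profile[OF phi] by blast
  interpret diffusion_approximation \<phi> "gradx \<phi>" K B0 B1 B2 \<nu> lam \<nu>1 \<nu>2
    unfolding \<nu>_def
    using profile coll_freq_measurable[OF sigma_meas M_measurable]
      coll_freq_bounds[OF sigma_meas sigma_bounds(3) less_imp_le[OF M_pos] M_int] sigma_bounds(1)
      lambda_meas lam_L1 lam_moment
    by (intro diffusion_approximation.intro diffusion_approximation_axioms.intro) auto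
  have "F = flux" "G = flux_limit"
    unfolding F_def G_def flux_def flux_limit_def by simp_all
  then show ?thesis
    using uniform_limit_flux L2_flux_tendsto_zero integral_inner_scaleR_eq_DT_apply[OF lambda_meas lam_moment]
    by (simp add: flux_limit_def)
qed

end
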